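(* Let $D$ be a Dirac operator for a finite complex spectral triple over $\mathcal A$, let $\xi:=\sum_{i\neq j}P_i\,dP_j\in\Omega^1(\mathcal A)$ and $\hat\xi:=\pi(\xi)$. Suppose $\hat\xi^{\,2}=\sum_i\pi(P_i)\hat\xi^{\,2}\pi(P_i)$. Then in $\Omega^2(\mathcal A)$ one has $\sum_iP_i\xi\xi P_i=\xi\xi$, $d\xi=2\xi\xi$, and for every $\omega\in\Omega^1(\mathcal A)$ $$d\omega=\xi\omega+\omega\xi .$$ Consequently the curvature $F(H):=dH+HH$ of the one-form $H=-2\xi$ vanishes in $\Omega^2(\mathcal A)$.
   Context: Let $\mathcal A=\bigoplus_{i=1}^k M_{n_i}(\mathbb C)$ ($n_i\ge 1$), with involution $a\mapsto a^*$ given by blockwise conjugate transpose. A finite complex spectral triple over $\mathcal A$ consists of: a finite-dimensional complex Hilbert space $\mathcal H$; a faithful $*$-representation $\pi:\mathcal A\to B(\mathcal H)$; an antilinear isometry $J$ of $\mathcal H$ with $J^2=1$ such that $\pi^0(a):=J\pi(a)^*J$ defines a representation of the opposite algebra $\mathcal A^0$ and $[\pi^0(a),\pi(b)]=0$ for all $a,b\in\mathcal A$; and a grading $\gamma\in B(\mathcal H)$ with $\gamma^*=\gamma$, $\gamma^2=1$, $J\gamma=\gamma J$, $\gamma\pi(a)=\pi(a)\gamma$ for all $a$, and $\gamma=\sum_m\pi(x_m)\pi^0(y_m)$ for finitely many $x_m,y_m\in\mathcal A$. Let $P_i\in\mathcal A$ be the element with the identity matrix in the $i$-th block and zeros elsewhere.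 A Dirac operator is a self-adjoint $D\in B(\mathcal H)$ with $DJ=JD$, $D\gamma=-\gamma D$ and $[[D,\pi(a)],\pi^0(b)]=0$ for all $a,b$. Let $\Omega_u\mathcal A$ be the universal differential graded algebra of $\mathcal A$; $\pi$ extends to it by $\pi(a_0\,da_1\cdots da_n)=\pi(a_0)[D,\pi(a_1)]\cdots[D,\pi(a_n)]$. The differential algebra of the spectral triple is $\Omega(\mathcal A)=\Omega_u\mathcal A/(\ker\pi+d\ker\pi)$, i.e. $\Omega^n(\mathcal A)=\Omega^n_u\mathcal A/(\Omega^n_u\mathcal A\cap(\ker\pi+d\ker\pi))$, with the induced product and differential $d$. *)

theory Defs
  imports Complex_Main "Jordan_Normal_Form.Matrix"
begin

text \<open>Elements of A are the N x N complex matrices (N = sum of the block sizes) which are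
  block diagonal w.r.t. these blocks. Block indices are 0,...,k-1.\<close>

definition bsize :: "nat list \<Rightarrow> nat" where
  "bsize ns = sum_list ns"

definition blk :: "nat list \<Rightarrow> nat \<Rightarrow> nat" where
  "blk ns r = (LEAST i. r < sum_list (take (Suc i) ns))"

definition alg :: "nat list \<Rightarrow> complex mat set" where
  "alg ns = {M \<in> carrier_mat (bsize ns) (bsize ns).
     \<forall>r s. r < bsize ns \<longrightarrow> s < bsize ns \<longrightarrow> blk ns r \<noteq> blk ns s \<longrightarrow> M $$ (r, s) = 0}"

definition Pblk :: "nat list \<Rightarrow> nat \<Rightarrow> complex mat" where
  "Pblk ns i = mat (bsize ns) (bsize ns) (\<lambda>(r, s). if r = s \<and> blk ns r = i then 1 else 0)"

definition adj :: "complex mat \<Rightarrow> complex mat" where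
  "adj M = mat (dim_col M) (dim_row M) (\<lambda>(i, j). cnj (M $$ (j, i)))"

definition vnorm2 :: "complex vec \<Rightarrow> real" where
  "vnorm2 v = (\<Sum>i<dim_vec v. (cmod (v $ i))\<^sup>2)"

definition comm :: "complex mat \<Rightarrow> complex mat \<Rightarrow> complex mat" where
  "comm X Y = X * Y - Y * X"

text \<open>H = C^m; operators are m x m complex matrices; J is an arbitrary map on vectors.\<close>

definition pi0 :: "(complex mat \<Rightarrow> complex mat) \<Rightarrow> (complex vec \<Rightarrow> complex vec)
    \<Rightarrow> complex mat \<Rightarrow> complex vec \<Rightarrow> complex vec" where
  "pi0 \<pi> J a v = J (adj (\<pi> a) *\<^sub>v J v)"

definition vsum :: "nat \<Rightarrow> complex vec list \<Rightarrow> complex vec" where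
  "vsum m vs = foldr (+) vs (0\<^sub>v m)"

definition star_rep :: "nat list \<Rightarrow> nat \<Rightarrow> (complex mat \<Rightarrow> complex mat) \<Rightarrow> bool" where
  "star_rep ns m \<pi> \<longleftrightarrow>
     (\<forall>a\<in>alg ns. \<pi> a \<in> carrier_mat m m) \<and>
     (\<forall>a\<in>alg ns. \<forall>b\<in>alg ns. \<pi> (a + b) = \<pi> a + \<pi> b) \<and>
     (\<forall>c. \<forall>a\<in>alg ns. \<pi> (c \<cdot>\<^sub>m a) = c \<cdot>\<^sub>m \<pi> a) \<and>
     (\<forall>a\<in>alg ns. \<forall>b\<in>alg ns. \<pi> (a * b) = \<pi> a * \<pi> b) \<and>
     (\<forall>a\<in>alg ns. \<pi> (adj a) = adj (\<pi> a)) \<and>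
     \<pi> (1\<^sub>m (bsize ns)) = 1\<^sub>m m"

definition finite_spectral_triple ::
  "nat list \<Rightarrow> nat \<Rightarrow> (complex mat \<Rightarrow> complex mat) \<Rightarrow> (complex vec \<Rightarrow> complex vec)
     \<Rightarrow> complex mat \<Rightarrow> bool" where
  "finite_spectral_triple ns m \<pi> J \<gamma> \<longleftrightarrow>
     (\<forall>n \<in> set ns. n \<ge> 1) \<and>
     star_rep ns m \<pi> \<and> inj_on \<pi> (alg ns) \<and>
     \<comment> \<open>J antilinear isometry with J^2 = 1\<close>
     (\<forall>v \<in> carrier_vec m. J v \<in> carrier_vec m) \<and>
     (\<forall>v \<in> carrier_vec m. \<forall>w \<in> carrier_vec m. J (v + w) = J v + J w) \<and>
     (\<forall>c. \<forall>v \<in> carrier_vec m. J (c \<cdot>\<^sub>v v) = cnj c \<cdot>\<^sub>v J v) \<and>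
     (\<forall>v \<in> carrier_vec m. vnorm2 (J v) = vnorm2 v) \<and>
     (\<forall>v \<in> carrier_vec m. J (J v) = v) \<and>
     \<comment> \<open>pi0 is a representation of the opposite algebra\<close>
     (\<forall>a\<in>alg ns. \<forall>b\<in>alg ns. \<forall>v \<in> carrier_vec m. pi0 \<pi> J (a + b) v = pi0 \<pi> J a v + pi0 \<pi> J b v) \<and>
     (\<forall>c. \<forall>a\<in>alg ns. \<forall>v \<in> carrier_vec m. pi0 \<pi> J (c \<cdot>\<^sub>m a) v = c \<cdot>\<^sub>v pi0 \<pi> J a v) \<and>
     (\<forall>a\<in>alg ns. \<forall>b\<in>alg ns. \<forall>v \<in> carrier_vec m. pi0 \<pi> J (a * b) v = pi0 \<pi> J b (pi0 \<pi> J a v)) \<and>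
     \<comment> \<open>[pi0(a), pi(b)] = 0\<close>
     (\<forall>a\<in>alg ns. \<forall>b\<in>alg ns. \<forall>v \<in> carrier_vec m. pi0 \<pi> J a (\<pi> b *\<^sub>v v) = \<pi> b *\<^sub>v pi0 \<pi> J a v) \<and>
     \<comment> \<open>grading\<close>
     \<gamma> \<in> carrier_mat m m \<and> adj \<gamma> = \<gamma> \<and> \<gamma> * \<gamma> = 1\<^sub>m m \<and>
     (\<forall>v \<in> carrier_vec m. J (\<gamma> *\<^sub>v v) = \<gamma> *\<^sub>v J v) \<and>
     (\<forall>a\<in>alg ns. \<gamma> * \<pi> a = \<pi> a * \<gamma>) \<and>
     (\<exists>xys. (\<forall>(x, y) \<in> set xys. x \<in> alg ns \<and> y \<in> alg ns) \<and>
        (\<forall>v \<in> carrier_vec m. \<gamma> *\<^sub>v v = vsum m (map (\<lambda>(x, y). \<pi> x *\<^sub>v pi0 \<pi> J y v) xys)))"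

definition dirac_operator ::
  "nat list \<Rightarrow> nat \<Rightarrow> (complex mat \<Rightarrow> complex mat) \<Rightarrow> (complex vec \<Rightarrow> complex vec)
     \<Rightarrow> complex mat \<Rightarrow> complex mat \<Rightarrow> bool" where
  "dirac_operator ns m \<pi> J \<gamma> D \<longleftrightarrow>
     D \<in> carrier_mat m m \<and> adj D = D \<and>
     (\<forall>v \<in> carrier_vec m. D *\<^sub>v J v = J (D *\<^sub>v v)) \<and>
     D * \<gamma> = - (\<gamma> * D) \<and>
     (\<forall>a\<in>alg ns. \<forall>b\<in>alg ns. \<forall>v \<in> carrier_vec m.
        comm D (\<pi> a) *\<^sub>v pi0 \<pi> J b v = pi0 \<pi> J b (comm D (\<pi> a) *\<^sub>v v))"

text \<open>A word [a0, a1, ..., an] stands for the universal form a0 da1 ... dan in Omega_u^n A;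
  a list of words stands for their sum. Every element of Omega_u A is represented this way
  (scalars are absorbed into a0). All operations below are the operations of Omega_u A
  computed on representatives via the Leibniz rule.\<close>

type_synonym uform = "complex mat list list"

definition is_uform :: "nat list \<Rightarrow> nat \<Rightarrow> uform \<Rightarrow> bool" where
  "is_uform ns n u \<longleftrightarrow> (\<forall>w \<in> set u. length w = Suc n \<and> set w \<subseteq> alg ns)"

definition uadd :: "uform \<Rightarrow> uform \<Rightarrow> uform" where
  "uadd u v = u @ v"

definition uneg :: "uform \<Rightarrow> uform" where
  "uneg u = map (\<lambda>w. (- hd w) # tl w) u"

definition usub :: "uform \<Rightarrow> uform \<Rightarrow> uform" where
  "usub u v = uadd u (uneg v)"

definition ud :: "nat list \<Rightarrow> uform \<Rightarrow> uform" where
  "ud ns u = map (\<lambda>w. 1\<^sub>m (bsize ns) # w) u"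

text \<open>rmul x as b computes (x da1 ... dak) b using da b = d(ab) - a db\<close>
fun rmul :: "nat list \<Rightarrow> complex mat \<Rightarrow> complex mat list \<Rightarrow> complex mat \<Rightarrow> uform" where
  "rmul ns x [] b = [[x * b]]"
| "rmul ns x (a # as) b =
     concat (map (\<lambda>c. [x # (a * hd c) # tl c, (- (x * a)) # c]) (rmul ns (1\<^sub>m (bsize ns)) as b))"

definition wmul :: "nat list \<Rightarrow> complex mat list \<Rightarrow> complex mat list \<Rightarrow> uform" where
  "wmul ns w v = map (\<lambda>c. c @ tl v) (rmul ns (hd w) (tl w) (hd v))"

definition umul :: "nat list \<Rightarrow> uform \<Rightarrow> uform \<Rightarrow> uform" where
  "umul ns u v = concat (map (\<lambda>w. concat (map (\<lambda>w'. wmul ns w w') v)) u)"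

definition piword :: "nat \<Rightarrow> (complex mat \<Rightarrow> complex mat) \<Rightarrow> complex mat \<Rightarrow> complex mat list \<Rightarrow> complex mat" where
  "piword m \<pi> D w = \<pi> (hd w) * foldr (\<lambda>a M. comm D (\<pi> a) * M) (tl w) (1\<^sub>m m)"

definition piform :: "nat \<Rightarrow> (complex mat \<Rightarrow> complex mat) \<Rightarrow> complex mat \<Rightarrow> uform \<Rightarrow> complex mat" where
  "piform m \<pi> D u = foldr (\<lambda>w M. piword m \<pi> D w + M) u (0\<^sub>m m m)"

text \<open>Equality in Omega^n(A) = Omega_u^n A / (Omega_u^n A \<inter> (ker pi + d ker pi)), n \<ge> 1:
  u - v lies in ker pi + d ker pi, i.e. u - v = k + dj with j \<in> Omega_u^(n-1) \<inter> ker pi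
  and k \<in> Omega_u^n \<inter> ker pi.\<close>
definition omega_eq :: "nat list \<Rightarrow> nat \<Rightarrow> (complex mat \<Rightarrow> complex mat) \<Rightarrow> complex mat
    \<Rightarrow> nat \<Rightarrow> uform \<Rightarrow> uform \<Rightarrow> bool" where
  "omega_eq ns m \<pi> D n u v \<longleftrightarrow>
     (\<exists>j. is_uform ns (n - 1) j \<and> piform m \<pi> D j = 0\<^sub>m m m \<and>
          piform m \<pi> D (usub (usub u v) (ud ns j)) = 0\<^sub>m m m)"

definition xi :: "nat list \<Rightarrow> uform" where
  "xi ns = concat (map (\<lambda>i. concat (map (\<lambda>j. if i \<noteq> j then [[Pblk ns i, Pblk ns j]] else [])
             [0..<length ns])) [0..<length ns])"

end

theory Submission
  imports Defs
begin

text \<open>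
  Write \<open>p\<^sub>i = \<pi>(P\<^sub>i)\<close> and \<open>\<xi>\<^sub>0 = D - \<Sum>\<^sub>i p\<^sub>i D p\<^sub>i\<close>.
  Since \<open>\<Sum>\<^sub>j [D, p\<^sub>j] = [D, 1] = 0\<close>, the representative \<open>\<pi>(\<xi>) = \<Sum>\<^bsub>i\<noteq>j\<^esub> p\<^sub>i [D, p\<^sub>j]\<close>
  equals \<open>\<xi>\<^sub>0\<close>. The compressions \<open>X = p\<^sub>i [D, \<pi>(a)] p\<^sub>i\<close> vanish: on the range of \<open>p\<^sub>i\<close> the
  grading acts through an element of the span of \<open>\<pi>\<^sup>0(\<A>)\<close>, which commutes with \<open>X\<close> by the
  order-one condition, so \<open>\<gamma>\<close> commutes with \<open>X\<close>; but \<open>\<gamma>\<close> also anticommutes with \<open>[D, \<pi>(a)]\<close>,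
  hence \<open>\<gamma> X = 0\<close>. Consequently \<open>\<Sum>\<^sub>i p\<^sub>i D p\<^sub>i\<close> commutes with \<open>\<pi>(\<A>)\<close>, so
  \<open>[D, \<pi>(a)] = [\<xi>\<^sub>0, \<pi>(a)]\<close>, and \<open>p\<^sub>i \<xi>\<^sub>0 p\<^sub>i = 0\<close>.

  All claims are then matrix identities, because two forms are equal in \<open>\<Omega>(\<A>)\<close> as soon as
  their representatives agree up to a junk term \<open>dj\<close> with \<open>\<pi>(j) = 0\<close>:
  \<open>\<pi>(d\<xi>) = \<xi>\<^sub>0\<^sup>2 + \<Sum>\<^sub>i p\<^sub>i \<xi>\<^sub>0\<^sup>2 p\<^sub>i\<close>, which is \<open>2 \<xi>\<^sub>0\<^sup>2\<close> under the hypothesis that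
  \<open>\<xi>\<^sub>0\<^sup>2\<close> is block diagonal. A one-form \<open>\<omega>\<close> is congruent modulo \<open>ker \<pi>\<close> to a sum of
  forms \<open>x P\<^sub>i d((1 - P\<^sub>i) y)\<close>; for those, \<open>\<pi>(d\<eta>) = \<xi>\<^sub>0 \<pi>(\<eta>) + \<pi>(\<eta>) \<xi>\<^sub>0\<close> follows from
  \<open>p\<^sub>i \<xi>\<^sub>0 p\<^sub>i = 0\<close> and \<open>p\<^sub>i \<xi>\<^sub>0\<^sup>2 (1 - p\<^sub>i) = 0\<close>, and \<open>d\<omega> - d\<eta>\<close> is junk.
\<close>

lemma index_mult_mat_sum:
  "A \<in> carrier_mat n k \<Longrightarrow> B \<in> carrier_mat k n' \<Longrightarrow> i < n \<Longrightarrow> j < n' \<Longrightarrow>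
    (A * B) $$ (i, j) = (\<Sum>t<k. A $$ (i, t) * B $$ (t, j))"
  by (simp add: scalar_prod_def lessThan_atLeast0)

text \<open>Instances of the library's ring laws and carrier rule for square matrices of one fixed
  dimension: in the general versions an inner dimension occurs only in the premises, which the
  simplifier cannot instantiate.\<close>

lemmas square_mat_simps =
  assoc_mult_mat[of _ n n _ n _ n] mult_add_distrib_mat[of _ n n _ n _]
  add_mult_distrib_mat[of _ n n _ _ n] mult_minus_distrib_mat[of _ n n _ n _]
  minus_mult_distrib_mat[of _ n n _ _ n] mult_smult_assoc_mat[of _ n n _ n]
  mult_smult_distrib[of _ n n _ n]
  for n

lemmas square_mult_carrier[simp] = mult_carrier_mat[of _ n n _ n] for n

declare minus_carrier_mat[simp]

lemma eq_uminus_self_mat: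
  fixes Z :: "'a :: field_char_0 mat"
  assumes "Z \<in> carrier_mat n n" and "Z = - Z"
  shows "Z = 0\<^sub>m n n"
proof (rule eq_matI)
  fix i j assume "i < dim_row (0\<^sub>m n n)" "j < dim_col (0\<^sub>m n n)"
  with assms have "Z $$ (i, j) = - Z $$ (i, j)"
    by (metis carrier_matD index_uminus_mat(1) index_zero_mat(2,3))
  then have "Z $$ (i, j) + Z $$ (i, j) = 0" by (simp only: add_eq_0_iff)
  then have "2 * Z $$ (i, j) = 0" by (simp only: mult_2)
  then show "Z $$ (i, j) = 0\<^sub>m n n $$ (i, j)" using \<open>i < dim_row (0\<^sub>m n n)\<close> \<open>j < dim_col (0\<^sub>m n n)\<close> by simp
qed (use assms in auto)

lemma mult_left_commute_mat:
  fixes A B C :: "'a :: semiring_0 mat"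
  assumes "A \<in> carrier_mat n n" and "B \<in> carrier_mat n n" and "C \<in> carrier_mat n n"
    and "A * B = B * A"
  shows "A * (B * C) = B * (A * C)"
proof -
  have "A * (B * C) = A * B * C" using assoc_mult_mat[OF assms(1-3)] ..
  also have "\<dots> = B * A * C" unfolding \<open>A * B = B * A\<close> ..
  also have "\<dots> = B * (A * C)" using assoc_mult_mat[OF assms(2,1,3)] .
  finally show ?thesis .
qed

lemma commute_mult_mat:
  fixes A B C :: "'a :: semiring_0 mat"
  assumes A: "A \<in> carrier_mat n n" and B: "B \<in> carrier_mat n n" and C: "C \<in> carrier_mat n n"
    and AB: "A * B = B * A" and AC: "A * C = C * A"
  shows "A * (B * C) = B * C * A"
proof -
  have "A * (B * C) = B * (A * C)" using mult_left_commute_mat[OF A B C AB] .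
  also have "\<dots> = B * C * A" unfolding AC using A B C by simp
  finally show ?thesis .
qed

lemma comm_carrier[simp]: "X \<in> carrier_mat n n \<Longrightarrow> A \<in> carrier_mat n n \<Longrightarrow> comm X A \<in> carrier_mat n n"
  by (simp add: comm_def minus_carrier_mat)

lemma comm_dims[simp]: "dim_row (comm X A) = dim_row A" "dim_col (comm X A) = dim_col X"
  by (simp_all add: comm_def)

lemma comm_mult:
  assumes "X \<in> carrier_mat n n" and "A \<in> carrier_mat n n" and "B \<in> carrier_mat n n"
  shows "comm X (A * B) = comm X A * B + A * comm X B"
  using assms by (simp add: comm_def square_mat_simps[where n=n]) (auto intro: eq_matI)

lemma comm_uminus: "X \<in> carrier_mat n n \<Longrightarrow> A \<in> carrier_mat n n \<Longrightarrow> comm X (- A) = - comm X A"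
  unfolding comm_def by (auto intro: eq_matI)

lemma comm_one: "X \<in> carrier_mat n n \<Longrightarrow> comm X (1\<^sub>m n) = 0\<^sub>m n n"
  unfolding comm_def by (auto intro: eq_matI)

lemma comm_square_of_idem:
  fixes X P :: "complex mat"
  assumes X: "X \<in> carrier_mat n n" and P: "P \<in> carrier_mat n n"
    and PP: "P * P = P" and PXP: "P * X * P = 0\<^sub>m n n"
  shows "comm X P * comm X P = - (X * P * X) - P * (X * X) * P"
proof -
  have "comm X P * comm X P = X * (P * X * P) - X * (P * P) * X - P * (X * X) * P + P * X * P * X"
    unfolding comm_def using X P by (simp add: square_mat_simps[where n = n]) (auto intro: eq_matI)
  also have "\<dots> = - (X * P * X) - P * (X * X) * P"
    unfolding PP PXP using X P carrier_matD[OF X] by (auto intro: eq_matI)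
  finally show ?thesis .
qed

lemma comm_mult_comm_of_orth:
  fixes X A B :: "complex mat"
  assumes X: "X \<in> carrier_mat n n" and A: "A \<in> carrier_mat n n" and B: "B \<in> carrier_mat n n"
    and AB: "A * B = 0\<^sub>m n n" and AXXB: "A * (X * X) * B = 0\<^sub>m n n"
  shows "comm X A * comm X B = X * (A * X * B) + A * X * B * X"
proof -
  have "comm X A * comm X B = X * (A * X * B) - X * (A * B) * X - A * (X * X) * B + A * X * B * X"
    unfolding comm_def using X A B by (simp add: square_mat_simps[where n = n]) (auto intro: eq_matI)
  also have "\<dots> = X * (A * X * B) + A * X * B * X"
    unfolding AB AXXB using X A B carrier_matD[OF X] by (auto intro: eq_matI)
  finally show ?thesis .
qed

definition msum :: "nat \<Rightarrow> 'a :: monoid_add mat list \<Rightarrow> 'a mat" where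
  "msum n Ms = foldr (+) Ms (0\<^sub>m n n)"

lemma msum_Nil[simp]: "msum n [] = 0\<^sub>m n n"
  by (simp add: msum_def)

lemma msum_Cons[simp]: "msum n (M # Ms) = M + msum n Ms"
  by (simp add: msum_def)

lemma msum_dims[simp]: "dim_row (msum n Ms) = n" "dim_col (msum n Ms) = n"
  by (induct Ms) auto

lemma msum_carrier[simp, intro]: "\<forall>M\<in>set Ms. M \<in> carrier_mat n n \<Longrightarrow> msum n Ms \<in> carrier_mat n n"
  by (induct Ms) auto

lemma msum_append:
  "\<forall>M\<in>set (Ms @ Ns). M \<in> carrier_mat n n \<Longrightarrow> msum n (Ms @ Ns) = msum n Ms + msum n Ns"
  by (induct Ms) (auto simp: assoc_add_mat[of _ n n])

lemma msum_concat:
  "\<forall>M\<in>set (concat Mss). M \<in> carrier_mat n n \<Longrightarrow> msum n (concat Mss) = msum n (map (msum n) Mss)"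
  by (induct Mss) (simp_all add: msum_append)

lemma msum_map_zero: "msum n (map (\<lambda>x. 0\<^sub>m n n) xs) = 0\<^sub>m n n"
  by (induct xs) auto

lemma msum_map_add:
  fixes f g :: "'b \<Rightarrow> 'a :: comm_monoid_add mat"
  assumes "\<forall>x\<in>set xs. f x \<in> carrier_mat n n" and "\<forall>x\<in>set xs. g x \<in> carrier_mat n n"
  shows "msum n (map (\<lambda>x. f x + g x) xs) = msum n (map f xs) + msum n (map g xs)"
  using assms by (induct xs) (auto simp: ac_simps)

lemma msum_map_uminus:
  fixes f :: "'b \<Rightarrow> 'a :: ab_group_add mat"
  assumes "\<forall>x\<in>set xs. f x \<in> carrier_mat n n"
  shows "msum n (map (\<lambda>x. - f x) xs) = - msum n (map f xs)"
  using assms by (induct xs) (auto intro: eq_matI)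

lemma msum_map_minus:
  fixes f g :: "'b \<Rightarrow> 'a :: ab_group_add mat"
  assumes "\<forall>x\<in>set xs. f x \<in> carrier_mat n n" and "\<forall>x\<in>set xs. g x \<in> carrier_mat n n"
  shows "msum n (map (\<lambda>x. f x - g x) xs) = msum n (map f xs) - msum n (map g xs)"
  using assms by (induct xs) (auto intro: eq_matI)

lemma mult_msum_left:
  fixes A :: "'a :: semiring_0 mat"
  assumes "A \<in> carrier_mat n n" and "\<forall>M\<in>set Ms. M \<in> carrier_mat n n"
  shows "A * msum n Ms = msum n (map ((*) A) Ms)"
  using assms by (induct Ms) (auto simp: mult_add_distrib_mat[of _ n n])

lemma mult_msum_right:
  fixes A :: "'a :: semiring_0 mat"
  assumes "A \<in> carrier_mat n n" and "\<forall>M\<in>set Ms. M \<in> carrier_mat n n"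
  shows "msum n Ms * A = msum n (map (\<lambda>M. M * A) Ms)"
  using assms by (induct Ms) (auto simp: add_mult_distrib_mat[of _ n n])

lemma msum_single:
  assumes "distinct xs" and "i \<in> set xs" and "\<forall>j\<in>set xs. j \<noteq> i \<longrightarrow> f j = 0\<^sub>m n n"
    and "\<forall>j\<in>set xs. f j \<in> carrier_mat n n"
  shows "msum n (map f xs) = (f i :: 'a :: monoid_add mat)"
  using assms
proof (induct xs)
  case (Cons a xs)
  show ?case
  proof (cases "a = i")
    case True
    with Cons.prems have "map f xs = map (\<lambda>j. 0\<^sub>m n n) xs" by auto
    with True Cons.prems show ?thesis by (simp only: msum_map_zero list.map msum_Cons) simp
  qed (use Cons in auto)
qed simp

lemma msum_if_neq:
  fixes f :: "'b \<Rightarrow> 'a :: ab_group_add mat"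
  assumes "distinct xs" and "i \<in> set xs" and "\<forall>x\<in>set xs. f x \<in> carrier_mat n n"
  shows "msum n (map (\<lambda>j. if i \<noteq> j then f j else 0\<^sub>m n n) xs) = msum n (map f xs) - f i"
  using assms
proof (induct xs)
  case (Cons a xs)
  show ?case
  proof (cases "a = i")
    case True
    with Cons.prems have "map (\<lambda>j. if i \<noteq> j then f j else 0\<^sub>m n n) xs = map f xs" by auto
    with True Cons.prems show ?thesis by (simp only: list.map msum_Cons) (auto intro: eq_matI)
  qed (use Cons in \<open>auto intro!: eq_matI\<close>)
qed simp

lemma commute_msum:
  fixes X :: "'a :: semiring_0 mat"
  assumes "X \<in> carrier_mat n n" and "\<forall>M\<in>set Ms. M \<in> carrier_mat n n \<and> X * M = M * X"
  shows "X * msum n Ms = msum n Ms * X"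
proof -
  have "X * msum n Ms = msum n (map ((*) X) Ms)" using assms by (simp add: mult_msum_left)
  also have "map ((*) X) Ms = map (\<lambda>M. M * X) Ms" using assms(2) by auto
  also have "msum n \<dots> = msum n Ms * X" using assms by (simp add: mult_msum_right)
  finally show ?thesis .
qed

lemma msum_mult_vec:
  assumes "\<forall>M\<in>set Ms. M \<in> carrier_mat n n" and "v \<in> carrier_vec n"
  shows "msum n Ms *\<^sub>v v = vsum n (map (\<lambda>M. M *\<^sub>v v) Ms)"
  using assms by (induct Ms) (auto simp: vsum_def add_mult_distrib_mat_vec[of _ n n])

lemma comm_msum:
  assumes "X \<in> carrier_mat n n" and "\<forall>j\<in>set js. f j \<in> carrier_mat n n"
  shows "msum n (map (\<lambda>j. comm X (f j)) js) = comm X (msum n (map f js))"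
  using assms
proof (induct js)
  case Nil
  then show ?case by (simp add: comm_def) (auto intro: eq_matI)
next
  case (Cons a js)
  then have carrier: "msum n (map f js) \<in> carrier_mat n n" "f a \<in> carrier_mat n n" by auto
  from Cons have "msum n (map (\<lambda>j. comm X (f j)) (a # js)) = comm X (f a) + comm X (msum n (map f js))"
    by simp
  also have "\<dots> = comm X (msum n (map f (a # js)))"
    using carrier Cons.prems by (simp add: comm_def square_mat_simps[where n=n]) (auto intro: eq_matI)
  finally show ?case .
qed

definition diag_proj :: "nat \<Rightarrow> (nat \<Rightarrow> bool) \<Rightarrow> 'a :: zero_neq_one mat" where
  "diag_proj n P = mat n n (\<lambda>(r, s). if r = s \<and> P r then 1 else 0)"

lemma diag_proj_carrier[simp]: "diag_proj n P \<in> carrier_mat n n"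
  by (simp add: diag_proj_def)

lemma diag_proj_dims[simp]: "dim_row (diag_proj n P) = n" "dim_col (diag_proj n P) = n"
  by (simp_all add: diag_proj_def)

lemma index_diag_proj[simp]:
  "r < n \<Longrightarrow> s < n \<Longrightarrow> diag_proj n P $$ (r, s) = (if r = s \<and> P r then 1 else 0)"
  by (simp add: diag_proj_def)

lemma index_diag_proj_mult:
  fixes A :: "'a :: semiring_1 mat"
  assumes A: "A \<in> carrier_mat n n'" and r: "r < n" and s: "s < n'"
  shows "(diag_proj n P * A) $$ (r, s) = (if P r then A $$ (r, s) else 0)"
proof -
  have "(diag_proj n P * A) $$ (r, s) = (\<Sum>t<n. diag_proj n P $$ (r, t) * A $$ (t, s))"
    using index_mult_mat_sum[OF diag_proj_carrier A r s] .
  also have "\<dots> = (\<Sum>t<n. if t = r then (if P r then A $$ (r, s) else 0) else 0)"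
    by (rule sum.cong) (auto simp: r)
  finally show ?thesis using r by simp
qed

lemma index_mult_diag_proj:
  fixes A :: "'a :: semiring_1 mat"
  assumes A: "A \<in> carrier_mat n' n" and r: "r < n'" and s: "s < n"
  shows "(A * diag_proj n P) $$ (r, s) = (if P s then A $$ (r, s) else 0)"
proof -
  have "(A * diag_proj n P) $$ (r, s) = (\<Sum>t<n. A $$ (r, t) * diag_proj n P $$ (t, s))"
    using index_mult_mat_sum[OF A diag_proj_carrier r s] .
  also have "\<dots> = (\<Sum>t<n. if t = s then (if P s then A $$ (r, s) else 0) else 0)"
    by (rule sum.cong) (auto simp: s)
  finally show ?thesis using s by simp
qed

lemma diag_proj_mult: "diag_proj n P * diag_proj n Q = (diag_proj n (\<lambda>r. P r \<and> Q r) :: 'a :: semiring_1 mat)"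
proof (rule eq_matI)
  fix r s assume "r < dim_row (diag_proj n (\<lambda>r. P r \<and> Q r))" "s < dim_col (diag_proj n (\<lambda>r. P r \<and> Q r))"
  then have r: "r < n" and s: "s < n" by auto
  show "(diag_proj n P * diag_proj n Q) $$ (r, s) = (diag_proj n (\<lambda>r. P r \<and> Q r) :: 'a mat) $$ (r, s)"
    unfolding index_diag_proj_mult[OF diag_proj_carrier r s] using r s by auto
qed auto

lemma diag_proj_False: "diag_proj n (\<lambda>r. False) = 0\<^sub>m n n"
  by (rule eq_matI) auto

lemma add_diag_proj:
  "(\<And>r. r < n \<Longrightarrow> \<not> (P r \<and> Q r)) \<Longrightarrow>
    diag_proj n P + diag_proj n Q = (diag_proj n (\<lambda>r. P r \<or> Q r) :: 'a :: semiring_1 mat)"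
  by (rule eq_matI) auto

lemma msum_diag_proj:
  assumes "distinct xs" and "\<And>r i j. r < n \<Longrightarrow> i \<in> set xs \<Longrightarrow> j \<in> set xs \<Longrightarrow> P i r \<Longrightarrow> P j r \<Longrightarrow> i = j"
  shows "msum n (map (\<lambda>i. diag_proj n (P i)) xs) = (diag_proj n (\<lambda>r. \<exists>i\<in>set xs. P i r) :: 'a :: semiring_1 mat)"
  using assms
proof (induct xs)
  case Nil
  then show ?case by (simp add: diag_proj_False)
next
  case (Cons a xs)
  then have "msum n (map (\<lambda>i. diag_proj n (P i)) xs) = (diag_proj n (\<lambda>r. \<exists>i\<in>set xs. P i r) :: 'a mat)"
    by auto
  moreover have "diag_proj n (P a) + diag_proj n (\<lambda>r. \<exists>i\<in>set xs. P i r)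
      = (diag_proj n (\<lambda>r. P a r \<or> (\<exists>i\<in>set xs. P i r)) :: 'a mat)"
    by (rule add_diag_proj) (use Cons.prems in fastforce)
  ultimately show ?case by simp
qed

definition mat_unit :: "nat \<Rightarrow> nat \<Rightarrow> nat \<Rightarrow> 'a :: zero_neq_one mat" where
  "mat_unit n r s = mat n n (\<lambda>(u, v). if u = r \<and> v = s then 1 else 0)"

lemma mat_unit_carrier[simp]: "mat_unit n r s \<in> carrier_mat n n"
  by (simp add: mat_unit_def)

lemma mat_unit_dims[simp]: "dim_row (mat_unit n r s) = n" "dim_col (mat_unit n r s) = n"
  by (simp_all add: mat_unit_def)

lemma index_mat_unit[simp]:
  "u < n \<Longrightarrow> v < n \<Longrightarrow> mat_unit n r s $$ (u, v) = (if u = r \<and> v = s then 1 else 0)"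
  by (simp add: mat_unit_def)

lemma index_mat_unit_mult:
  fixes A :: "'a :: semiring_1 mat"
  assumes A: "A \<in> carrier_mat n n'" and u: "u < n" and v: "v < n'" and s: "s < n"
  shows "(mat_unit n r s * A) $$ (u, v) = (if u = r then A $$ (s, v) else 0)"
proof -
  have "(mat_unit n r s * A) $$ (u, v) = (\<Sum>t<n. mat_unit n r s $$ (u, t) * A $$ (t, v))"
    using index_mult_mat_sum[OF mat_unit_carrier A u v] .
  also have "\<dots> = (\<Sum>t<n. if t = s then (if u = r then A $$ (s, v) else 0) else 0)"
    by (rule sum.cong) (auto simp: u)
  finally show ?thesis using s by simp
qed

lemma index_mult_mat_unit:
  fixes A :: "'a :: semiring_1 mat"
  assumes A: "A \<in> carrier_mat n' n" and u: "u < n'" and v: "v < n" and r: "r < n"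
  shows "(A * mat_unit n r s) $$ (u, v) = (if v = s then A $$ (u, r) else 0)"
proof -
  have "(A * mat_unit n r s) $$ (u, v) = (\<Sum>t<n. A $$ (u, t) * mat_unit n r s $$ (t, v))"
    using index_mult_mat_sum[OF A mat_unit_carrier u v] .
  also have "\<dots> = (\<Sum>t<n. if t = r then (if v = s then A $$ (u, r) else 0) else 0)"
    by (rule sum.cong) (auto simp: v)
  finally show ?thesis using r by simp
qed

lemma mat_unit_sandwich:
  fixes X :: "'a :: comm_semiring_1 mat"
  assumes X: "X \<in> carrier_mat n n" and "s < n" and "r' < n"
  shows "mat_unit n r s * X * mat_unit n r' s' = X $$ (s, r') \<cdot>\<^sub>m mat_unit n r s'"
proof (rule eq_matI)
  fix u v assume "u < dim_row (X $$ (s, r') \<cdot>\<^sub>m mat_unit n r s')" "v < dim_col (X $$ (s, r') \<cdot>\<^sub>m mat_unit n r s')"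
  then have u: "u < n" and v: "v < n" by auto
  have UX: "mat_unit n r s * X \<in> carrier_mat n n" using mult_carrier_mat[OF mat_unit_carrier X] .
  show "(mat_unit n r s * X * mat_unit n r' s') $$ (u, v) = (X $$ (s, r') \<cdot>\<^sub>m mat_unit n r s') $$ (u, v)"
    unfolding index_mult_mat_unit[OF UX u v \<open>r' < n\<close>] index_mat_unit_mult[OF X u \<open>r' < n\<close> \<open>s < n\<close>]
    using u v by auto
qed (use X in auto)

lemma mat_unit_mult_mat_unit:
  assumes "r0 < n"
  shows "mat_unit n r r0 * mat_unit n r0 s = (mat_unit n r s :: 'a :: comm_semiring_1 mat)"
proof -
  have "mat_unit n r r0 * mat_unit n r0 s = mat_unit n r r0 * 1\<^sub>m n * (mat_unit n r0 s :: 'a mat)"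
    by simp
  also have "\<dots> = mat_unit n r s"
    unfolding mat_unit_sandwich[OF one_carrier_mat assms assms] using assms by (auto intro: eq_matI)
  finally show ?thesis .
qed

lemma alg_carrier: "a \<in> alg ns \<Longrightarrow> a \<in> carrier_mat (bsize ns) (bsize ns)"
  by (simp add: alg_def)

lemma alg_off_block_zero:
  "a \<in> alg ns \<Longrightarrow> r < bsize ns \<Longrightarrow> s < bsize ns \<Longrightarrow> blk ns r \<noteq> blk ns s \<Longrightarrow> a $$ (r, s) = 0"
  by (simp add: alg_def)

lemma algI:
  assumes "a \<in> carrier_mat (bsize ns) (bsize ns)"
    and "\<And>r s. r < bsize ns \<Longrightarrow> s < bsize ns \<Longrightarrow> blk ns r \<noteq> blk ns s \<Longrightarrow> a $$ (r, s) = 0"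
  shows "a \<in> alg ns"
  using assms by (simp add: alg_def)

lemma alg_add[simp, intro]: "a \<in> alg ns \<Longrightarrow> b \<in> alg ns \<Longrightarrow> a + b \<in> alg ns"
  by (rule algI) (auto simp: alg_def)

lemma alg_uminus[simp, intro]: "a \<in> alg ns \<Longrightarrow> - a \<in> alg ns"
  by (rule algI) (auto simp: alg_def)

lemma alg_minus[simp, intro]: "a \<in> alg ns \<Longrightarrow> b \<in> alg ns \<Longrightarrow> a - b \<in> alg ns"
  by (rule algI) (auto simp: alg_def)

lemma alg_one[simp, intro]: "1\<^sub>m (bsize ns) \<in> alg ns"
  by (rule algI) auto

lemma alg_mult[simp, intro]:
  assumes a: "a \<in> alg ns" and b: "b \<in> alg ns"
  shows "a * b \<in> alg ns"
proof (rule algI)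
  show "a * b \<in> carrier_mat (bsize ns) (bsize ns)"
    using a b by (auto dest!: alg_carrier)
  fix r s assume r: "r < bsize ns" and s: "s < bsize ns" and rs: "blk ns r \<noteq> blk ns s"
  have "(a * b) $$ (r, s) = (\<Sum>t<bsize ns. a $$ (r, t) * b $$ (t, s))"
    using index_mult_mat_sum[OF alg_carrier[OF a] alg_carrier[OF b] r s] .
  also have "\<dots> = 0"
  proof (rule sum.neutral, rule ballI)
    fix t assume "t \<in> {..<bsize ns}"
    then show "a $$ (r, t) * b $$ (t, s) = 0"
      using alg_off_block_zero[OF a r] alg_off_block_zero[OF b _ s] rs by (cases "blk ns r = blk ns t") auto
  qed
  finally show "(a * b) $$ (r, s) = 0" .
qed

lemma mat_unit_alg:
  "r < bsize ns \<Longrightarrow> s < bsize ns \<Longrightarrow> blk ns r = blk ns s \<Longrightarrow> mat_unit (bsize ns) r s \<in> alg ns"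
  by (rule algI) auto

lemma Pblk_eq_diag_proj: "Pblk ns i = diag_proj (bsize ns) (\<lambda>r. blk ns r = i)"
  by (simp add: Pblk_def diag_proj_def)

lemma Pblk_carrier[simp]: "Pblk ns i \<in> carrier_mat (bsize ns) (bsize ns)"
  by (simp add: Pblk_def)

lemma Pblk_alg[simp, intro]: "Pblk ns i \<in> alg ns"
  by (rule algI) (auto simp: Pblk_def)

lemma Pblk_mult: "Pblk ns i * Pblk ns j = (if i = j then Pblk ns i else 0\<^sub>m (bsize ns) (bsize ns))"
  unfolding Pblk_eq_diag_proj diag_proj_mult by (cases "i = j") (auto simp flip: diag_proj_False)

lemma Pblk_commute:
  assumes a: "a \<in> alg ns"
  shows "Pblk ns i * a = a * Pblk ns i"
proof (rule eq_matI)
  fix r s assume "r < dim_row (a * Pblk ns i)" "s < dim_col (a * Pblk ns i)"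
  then have r: "r < bsize ns" and s: "s < bsize ns" using alg_carrier[OF a] by (auto simp: Pblk_def)
  show "(Pblk ns i * a) $$ (r, s) = (a * Pblk ns i) $$ (r, s)"
    unfolding Pblk_eq_diag_proj index_diag_proj_mult[OF alg_carrier[OF a] r s]
      index_mult_diag_proj[OF alg_carrier[OF a] r s]
    using alg_off_block_zero[OF a r s] by auto
qed (use alg_carrier[OF a] in \<open>auto simp: Pblk_def\<close>)

lemma blk_less:
  assumes r: "r < bsize ns"
  shows "blk ns r < length ns"
proof -
  have ne: "ns \<noteq> []" using r by (auto simp: bsize_def)
  then have "r < sum_list (take (Suc (length ns - 1)) ns)" using r by (simp add: bsize_def)
  then have "blk ns r \<le> length ns - 1" unfolding blk_def by (rule Least_le)
  with ne show ?thesis by (cases ns) auto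
qed

lemma msum_Pblk: "msum (bsize ns) (map (Pblk ns) [0..<length ns]) = 1\<^sub>m (bsize ns)"
proof -
  have "msum (bsize ns) (map (Pblk ns) [0..<length ns])
      = diag_proj (bsize ns) (\<lambda>r. \<exists>i\<in>set [0..<length ns]. blk ns r = i)"
    unfolding Pblk_eq_diag_proj by (rule msum_diag_proj) auto
  also have "\<dots> = 1\<^sub>m (bsize ns)"
    by (rule eq_matI) (auto simp: blk_less)
  finally show ?thesis .
qed

lemma Pblk_eq_msum_mat_unit:
  "Pblk ns i = msum (bsize ns) (map (\<lambda>r. mat_unit (bsize ns) r r) (filter (\<lambda>r. blk ns r = i) [0..<bsize ns]))"
proof -
  let ?rs = "filter (\<lambda>r. blk ns r = i) [0..<bsize ns]"
  have units: "map (\<lambda>r. mat_unit (bsize ns) r r) ?rs = map (\<lambda>r. diag_proj (bsize ns) (\<lambda>u. u = r)) ?rs"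
    by (auto intro: eq_matI)
  have "Pblk ns i = (diag_proj (bsize ns) (\<lambda>u. \<exists>r\<in>set ?rs. u = r) :: complex mat)"
    unfolding Pblk_eq_diag_proj by (rule eq_matI) auto
  also have "\<dots> = msum (bsize ns) (map (\<lambda>r. diag_proj (bsize ns) (\<lambda>u. u = r)) ?rs)"
    by (rule msum_diag_proj[symmetric]) auto
  finally show ?thesis unfolding units .
qed

lemma eq_mat_by_mult_vec:
  fixes A B :: "'a :: semiring_1 mat"
  assumes "A \<in> carrier_mat n n'" and "B \<in> carrier_mat n n'"
    and "\<And>v. v \<in> carrier_vec n' \<Longrightarrow> A *\<^sub>v v = B *\<^sub>v v"
  shows "A = B"
proof (rule eq_matI)
  fix i j assume "i < dim_row B" "j < dim_col B"
  moreover have "(A *\<^sub>v unit_vec n' j) $ i = (B *\<^sub>v unit_vec n' j) $ i"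
    using assms(3)[of "unit_vec n' j"] by simp
  ultimately show "A $$ (i, j) = B $$ (i, j)" using assms(1,2) by auto
qed (use assms in auto)

definition mat_of_linear :: "nat \<Rightarrow> nat \<Rightarrow> ('a :: zero_neq_one vec \<Rightarrow> 'a vec) \<Rightarrow> 'a mat" where
  "mat_of_linear n' n f = mat n' n (\<lambda>(r, s). f (unit_vec n s) $ r)"

lemma mat_of_linear_carrier[simp]: "mat_of_linear n' n f \<in> carrier_mat n' n"
  by (simp add: mat_of_linear_def)

lemma mat_of_linear_mult_vec:
  fixes f :: "'a :: field vec \<Rightarrow> 'a vec"
  assumes carrier: "\<And>v. v \<in> carrier_vec n \<Longrightarrow> f v \<in> carrier_vec n'"
    and add: "\<And>v w. v \<in> carrier_vec n \<Longrightarrow> w \<in> carrier_vec n \<Longrightarrow> f (v + w) = f v + f w"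
    and smult: "\<And>c v. v \<in> carrier_vec n \<Longrightarrow> f (c \<cdot>\<^sub>v v) = c \<cdot>\<^sub>v f v"
    and v: "v \<in> carrier_vec n"
  shows "mat_of_linear n' n f *\<^sub>v v = f v"
proof -
  define M where "M = mat_of_linear n' n f"
  define trunc where "trunc k = vec n (\<lambda>i. if i < k then v $ i else 0)" for k
  have M: "M \<in> carrier_mat n' n" by (simp add: M_def)
  have M_unit: "M *\<^sub>v unit_vec n k = f (unit_vec n k)" if "k < n" for k
    using carrier[of "unit_vec n k"] that by (intro eq_vecI) (auto simp: M_def mat_of_linear_def)
  have trunc: "trunc k \<in> carrier_vec n" for k by (simp add: trunc_def)
  have "k \<le> n \<Longrightarrow> f (trunc k) = M *\<^sub>v trunc k" for k
  proof (induct k)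
    case 0
    have "trunc 0 = 0 \<cdot>\<^sub>v 0\<^sub>v n" by (auto simp: trunc_def)
    then have "f (trunc 0) = 0 \<cdot>\<^sub>v f (0\<^sub>v n)" by (simp add: smult)
    also have "\<dots> = M *\<^sub>v trunc 0"
      using carrier[of "0\<^sub>v n"] M by (intro eq_vecI) (auto simp: trunc_def scalar_prod_def)
    finally show ?case .
  next
    case (Suc k)
    have split: "trunc (Suc k) = trunc k + v $ k \<cdot>\<^sub>v unit_vec n k"
      by (intro eq_vecI) (auto simp: trunc_def unit_vec_def less_Suc_eq)
    have "f (trunc (Suc k)) = f (trunc k) + v $ k \<cdot>\<^sub>v f (unit_vec n k)"
      unfolding split by (simp add: add trunc smult)
    also have "\<dots> = M *\<^sub>v trunc k + v $ k \<cdot>\<^sub>v (M *\<^sub>v unit_vec n k)"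
      using Suc M_unit by simp
    also have "\<dots> = M *\<^sub>v trunc (Suc k)"
      unfolding split using M trunc by (simp add: mult_add_distrib_mat_vec[OF M] mult_mat_vec[OF M])
    finally show ?case .
  qed
  moreover have "trunc n = v" using v by (intro eq_vecI) (auto simp: trunc_def)
  ultimately show ?thesis unfolding M_def by auto
qed

section \<open>The spectral triple and its Dirac operator\<close>

locale finite_dirac =
  fixes ns :: "nat list" and m :: nat and \<pi> :: "complex mat \<Rightarrow> complex mat"
    and J :: "complex vec \<Rightarrow> complex vec" and \<gamma> D :: "complex mat"
  assumes triple: "finite_spectral_triple ns m \<pi> J \<gamma>"
    and dirac: "dirac_operator ns m \<pi> J \<gamma> D"
begin

lemmas mat_simps = square_mat_simps[where n=m]

lemmas minus_self_mat[simp] = minus_r_inv_mat[of _ m m]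

lemma star_rep: "star_rep ns m \<pi>"
  using triple by (simp add: finite_spectral_triple_def)

lemma pi_carrier[simp]: "a \<in> alg ns \<Longrightarrow> \<pi> a \<in> carrier_mat m m"
  using star_rep by (simp add: star_rep_def)

lemma pi_dims[simp]: "a \<in> alg ns \<Longrightarrow> dim_row (\<pi> a) = m" "a \<in> alg ns \<Longrightarrow> dim_col (\<pi> a) = m"
  using pi_carrier by blast+

lemma pi_add: "a \<in> alg ns \<Longrightarrow> b \<in> alg ns \<Longrightarrow> \<pi> (a + b) = \<pi> a + \<pi> b"
  using star_rep by (simp add: star_rep_def)

lemma pi_smult: "a \<in> alg ns \<Longrightarrow> \<pi> (c \<cdot>\<^sub>m a) = c \<cdot>\<^sub>m \<pi> a"
  using star_rep by (simp add: star_rep_def)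

lemma pi_mult: "a \<in> alg ns \<Longrightarrow> b \<in> alg ns \<Longrightarrow> \<pi> (a * b) = \<pi> a * \<pi> b"
  using star_rep by (simp add: star_rep_def)

lemma pi_one[simp]: "\<pi> (1\<^sub>m (bsize ns)) = 1\<^sub>m m"
  using star_rep by (simp add: star_rep_def)

lemma pi_uminus:
  assumes a: "a \<in> alg ns"
  shows "\<pi> (- a) = - \<pi> a"
proof -
  have "- a = (- 1) \<cdot>\<^sub>m a" using alg_carrier[OF a] by (auto intro: eq_matI)
  then have "\<pi> (- a) = (- 1) \<cdot>\<^sub>m \<pi> a" by (simp add: pi_smult[OF a])
  also have "\<dots> = - \<pi> a" using pi_carrier[OF a] by (auto intro: eq_matI)
  finally show ?thesis .
qed

lemma pi_minus:
  assumes a: "a \<in> alg ns" and b: "b \<in> alg ns"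
  shows "\<pi> (a - b) = \<pi> a - \<pi> b"
proof -
  have "a - b = a + (- b)" using alg_carrier[OF a] alg_carrier[OF b] by (auto intro: eq_matI)
  then have "\<pi> (a - b) = \<pi> a + - \<pi> b" by (simp add: pi_add a b pi_uminus)
  also have "\<dots> = \<pi> a - \<pi> b" using pi_carrier[OF a] pi_carrier[OF b] by (auto intro: eq_matI)
  finally show ?thesis .
qed

lemma pi_zero[simp]: "\<pi> (0\<^sub>m (bsize ns) (bsize ns)) = 0\<^sub>m m m"
proof -
  have "0\<^sub>m (bsize ns) (bsize ns) = (0::complex) \<cdot>\<^sub>m 1\<^sub>m (bsize ns)" by (auto intro: eq_matI)
  then have "\<pi> (0\<^sub>m (bsize ns) (bsize ns)) = (0::complex) \<cdot>\<^sub>m 1\<^sub>m m" by (simp add: pi_smult)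
  then show ?thesis by (auto intro: eq_matI)
qed

lemma pi_msum:
  "\<forall>x\<in>set xs. f x \<in> alg ns \<Longrightarrow> \<pi> (msum (bsize ns) (map f xs)) = msum m (map (\<lambda>x. \<pi> (f x)) xs)"
proof (induct xs)
  case (Cons a xs)
  have "msum (bsize ns) (map f xs) \<in> alg ns" using Cons.prems by (induct xs) (auto intro: algI)
  with Cons show ?case by (simp add: pi_add)
qed simp

lemma D_carrier[simp]: "D \<in> carrier_mat m m"
  using dirac by (simp add: dirac_operator_def)

lemma D_dims[simp]: "dim_row D = m" "dim_col D = m"
  using D_carrier by blast+

lemma D_anticommute_grading: "D * \<gamma> = - (\<gamma> * D)"
  using dirac by (simp add: dirac_operator_def)

lemma order_one:
  "a \<in> alg ns \<Longrightarrow> b \<in> alg ns \<Longrightarrow> v \<in> carrier_vec m \<Longrightarrow>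
    comm D (\<pi> a) *\<^sub>v pi0 \<pi> J b v = pi0 \<pi> J b (comm D (\<pi> a) *\<^sub>v v)"
  using dirac by (simp add: dirac_operator_def)

lemma grading_carrier[simp]: "\<gamma> \<in> carrier_mat m m"
  using triple by (simp add: finite_spectral_triple_def)

lemma grading_dims[simp]: "dim_row \<gamma> = m" "dim_col \<gamma> = m"
  using grading_carrier by blast+

lemma grading_square: "\<gamma> * \<gamma> = 1\<^sub>m m"
  using triple by (simp add: finite_spectral_triple_def)

lemma grading_commute_pi: "a \<in> alg ns \<Longrightarrow> \<gamma> * \<pi> a = \<pi> a * \<gamma>"
  using triple by (simp add: finite_spectral_triple_def)

lemma grading_mult_vec_eq_vsum:
  "\<exists>xys. (\<forall>(x, y) \<in> set xys. x \<in> alg ns \<and> y \<in> alg ns) \<and>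
     (\<forall>v \<in> carrier_vec m. \<gamma> *\<^sub>v v = vsum m (map (\<lambda>(x, y). \<pi> x *\<^sub>v pi0 \<pi> J y v) xys))"
  using triple by (simp add: finite_spectral_triple_def)

lemma comm_D_anticommute_grading:
  assumes a: "a \<in> alg ns"
  shows "comm D (\<pi> a) * \<gamma> = - (\<gamma> * comm D (\<pi> a))"
proof -
  have A: "\<pi> a \<in> carrier_mat m m" using a by simp
  have "comm D (\<pi> a) * \<gamma> = D * (\<pi> a * \<gamma>) - \<pi> a * (D * \<gamma>)"
    unfolding comm_def using A by (simp add: mat_simps)
  also have "\<dots> = D * (\<gamma> * \<pi> a) - \<pi> a * (- (\<gamma> * D))"
    by (simp add: grading_commute_pi[OF a] D_anticommute_grading)
  also have "\<dots> = (D * \<gamma>) * \<pi> a + (\<pi> a * \<gamma>) * D"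
    using A by (simp add: mat_simps) (auto intro: eq_matI)
  also have "\<dots> = (- (\<gamma> * D)) * \<pi> a + (\<gamma> * \<pi> a) * D"
    by (simp add: grading_commute_pi[OF a] D_anticommute_grading)
  also have "\<dots> = - (\<gamma> * comm D (\<pi> a))"
    unfolding comm_def using A by (simp add: mat_simps) (auto intro: eq_matI)
  finally show ?thesis .
qed

lemma J_carrier: "v \<in> carrier_vec m \<Longrightarrow> J v \<in> carrier_vec m"
  using triple by (simp add: finite_spectral_triple_def)

lemma J_add: "v \<in> carrier_vec m \<Longrightarrow> w \<in> carrier_vec m \<Longrightarrow> J (v + w) = J v + J w"
  using triple by (simp add: finite_spectral_triple_def)

lemma J_smult: "v \<in> carrier_vec m \<Longrightarrow> J (c \<cdot>\<^sub>v v) = cnj c \<cdot>\<^sub>v J v"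
  using triple by (simp add: finite_spectral_triple_def)

lemma pi0_commute_pi:
  "a \<in> alg ns \<Longrightarrow> b \<in> alg ns \<Longrightarrow> v \<in> carrier_vec m \<Longrightarrow> pi0 \<pi> J a (\<pi> b *\<^sub>v v) = \<pi> b *\<^sub>v pi0 \<pi> J a v"
  using triple by (simp add: finite_spectral_triple_def)

lemma adj_pi_carrier: "a \<in> alg ns \<Longrightarrow> adj (\<pi> a) \<in> carrier_mat m m"
  by (simp add: adj_def)

lemma pi0_carrier: "y \<in> alg ns \<Longrightarrow> v \<in> carrier_vec m \<Longrightarrow> pi0 \<pi> J y v \<in> carrier_vec m"
  unfolding pi0_def by (intro J_carrier mult_mat_vec_carrier[OF adj_pi_carrier]) (auto intro: J_carrier)

lemma pi0_add:
  assumes y: "y \<in> alg ns" and v: "v \<in> carrier_vec m" and w: "w \<in> carrier_vec m"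
  shows "pi0 \<pi> J y (v + w) = pi0 \<pi> J y v + pi0 \<pi> J y w"
  using adj_pi_carrier[OF y] J_carrier[OF v] J_carrier[OF w] unfolding pi0_def
  by (simp add: J_add[OF v w] mult_add_distrib_mat_vec[OF adj_pi_carrier[OF y]] J_add)

lemma pi0_smult:
  assumes y: "y \<in> alg ns" and v: "v \<in> carrier_vec m"
  shows "pi0 \<pi> J y (c \<cdot>\<^sub>v v) = c \<cdot>\<^sub>v pi0 \<pi> J y v"
  using adj_pi_carrier[OF y] J_carrier[OF v] unfolding pi0_def
  by (simp add: J_smult[OF v] mult_mat_vec[OF adj_pi_carrier[OF y]] J_smult)

definition pi0_mat :: "complex mat \<Rightarrow> complex mat" where
  "pi0_mat y = mat_of_linear m m (pi0 \<pi> J y)"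

lemma pi0_mat_carrier[simp]: "pi0_mat y \<in> carrier_mat m m"
  by (simp add: pi0_mat_def)

lemma pi0_mat_mult_vec: "y \<in> alg ns \<Longrightarrow> v \<in> carrier_vec m \<Longrightarrow> pi0_mat y *\<^sub>v v = pi0 \<pi> J y v"
  unfolding pi0_mat_def by (rule mat_of_linear_mult_vec) (auto intro: pi0_carrier pi0_add pi0_smult)

lemma pi0_mat_commute:
  assumes y: "y \<in> alg ns" and X: "X \<in> carrier_mat m m"
    and commute: "\<And>v. v \<in> carrier_vec m \<Longrightarrow> pi0 \<pi> J y (X *\<^sub>v v) = X *\<^sub>v pi0 \<pi> J y v"
  shows "pi0_mat y * X = X * pi0_mat y"
proof (rule eq_mat_by_mult_vec[of _ m m])
  fix v :: "complex vec" assume v: "v \<in> carrier_vec m"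
  have Xv: "X *\<^sub>v v \<in> carrier_vec m" using X v by simp
  have "(pi0_mat y * X) *\<^sub>v v = pi0_mat y *\<^sub>v (X *\<^sub>v v)"
    using X v by (simp add: assoc_mult_mat_vec[of _ m m _ m])
  also have "\<dots> = X *\<^sub>v pi0 \<pi> J y v"
    using y Xv v by (simp add: commute pi0_mat_mult_vec)
  also have "\<dots> = (X * pi0_mat y) *\<^sub>v v"
    using X y v by (simp add: pi0_mat_mult_vec assoc_mult_mat_vec[of _ m m _ m])
  finally show "(pi0_mat y * X) *\<^sub>v v = (X * pi0_mat y) *\<^sub>v v" .
qed (use X in auto)

lemma pi0_mat_commute_pi: "y \<in> alg ns \<Longrightarrow> b \<in> alg ns \<Longrightarrow> pi0_mat y * \<pi> b = \<pi> b * pi0_mat y"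
  by (rule pi0_mat_commute) (auto simp: pi0_commute_pi)

lemma pi0_mat_commute_comm: "y \<in> alg ns \<Longrightarrow> b \<in> alg ns \<Longrightarrow> pi0_mat y * comm D (\<pi> b) = comm D (\<pi> b) * pi0_mat y"
  by (rule pi0_mat_commute) (auto simp: order_one)

lemma grading_eq_msum:
  "\<exists>xys. set xys \<subseteq> alg ns \<times> alg ns \<and>
     \<gamma> = msum m (map (\<lambda>(x, y). \<pi> x * pi0_mat y) xys)"
proof -
  obtain xys where xys: "\<forall>(x, y) \<in> set xys. x \<in> alg ns \<and> y \<in> alg ns"
    and \<gamma>: "\<forall>v \<in> carrier_vec m. \<gamma> *\<^sub>v v = vsum m (map (\<lambda>(x, y). \<pi> x *\<^sub>v pi0 \<pi> J y v) xys)"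
    using grading_mult_vec_eq_vsum by blast
  have carrier: "\<forall>M\<in>set (map (\<lambda>(x, y). \<pi> x * pi0_mat y) xys). M \<in> carrier_mat m m"
    using xys by auto
  have "\<gamma> = msum m (map (\<lambda>(x, y). \<pi> x * pi0_mat y) xys)"
  proof (rule eq_mat_by_mult_vec[of _ m m])
    fix v :: "complex vec" assume v: "v \<in> carrier_vec m"
    have "msum m (map (\<lambda>(x, y). \<pi> x * pi0_mat y) xys) *\<^sub>v v
        = vsum m (map (\<lambda>M. M *\<^sub>v v) (map (\<lambda>(x, y). \<pi> x * pi0_mat y) xys))"
      by (rule msum_mult_vec[OF carrier v])
    also have "\<dots> = vsum m (map (\<lambda>(x, y). \<pi> x *\<^sub>v pi0 \<pi> J y v) xys)"
      unfolding map_map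
    proof (rule arg_cong[where f = "vsum m"], rule map_cong[OF refl])
      fix q assume "q \<in> set xys"
      with xys obtain x y where "q = (x, y)" "x \<in> alg ns" "y \<in> alg ns" by (cases q) auto
      with v show "((\<lambda>M. M *\<^sub>v v) \<circ> (\<lambda>(x, y). \<pi> x * pi0_mat y)) q = (\<lambda>(x, y). \<pi> x *\<^sub>v pi0 \<pi> J y v) q"
        by (simp add: pi0_mat_mult_vec assoc_mult_mat_vec[of _ m m _ m])
    qed
    finally show "\<gamma> *\<^sub>v v = msum m (map (\<lambda>(x, y). \<pi> x * pi0_mat y) xys) *\<^sub>v v"
      using \<gamma> v by simp
  qed (use carrier in auto)
  with xys show ?thesis by fast
qed

abbreviation proj :: "nat \<Rightarrow> complex mat" where
  "proj i \<equiv> \<pi> (Pblk ns i)"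

lemma proj_idem: "proj i * proj i = proj i"
  by (simp add: pi_mult[symmetric] Pblk_mult)

lemma proj_orth: "i \<noteq> j \<Longrightarrow> proj i * proj j = 0\<^sub>m m m"
  by (simp add: pi_mult[symmetric] Pblk_mult)

lemma proj_mult_proj_mult:
  assumes "Z \<in> carrier_mat m m"
  shows "proj i * (proj j * Z) = (if i = j then proj i * Z else 0\<^sub>m m m)"
proof -
  have "proj i * (proj j * Z) = proj i * proj j * Z" using assms by (simp add: mat_simps)
  then show ?thesis using assms by (simp add: proj_idem proj_orth)
qed

lemma proj_commute: "a \<in> alg ns \<Longrightarrow> proj i * \<pi> a = \<pi> a * proj i"
  by (simp add: pi_mult[symmetric] Pblk_commute)

lemma msum_proj: "msum m (map proj [0..<length ns]) = 1\<^sub>m m"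
  using pi_msum[of "[0..<length ns]" "Pblk ns"] by (simp add: msum_Pblk)

lemma msum_proj_sandwich:
  assumes "X \<in> carrier_mat m m" and "i < length ns"
  shows "proj i * msum m (map (\<lambda>j. proj j * X * proj j) [0..<length ns]) = proj i * X * proj i"
proof -
  have "proj i * msum m (map (\<lambda>j. proj j * X * proj j) [0..<length ns])
      = msum m (map (\<lambda>j. proj i * (proj j * X * proj j)) [0..<length ns])"
    using assms by (simp add: mult_msum_left o_def)
  also have "\<dots> = proj i * (proj i * X * proj i)"
    using assms by (intro msum_single) (auto simp: mat_simps proj_mult_proj_mult)
  also have "\<dots> = proj i * X * proj i"
    using assms by (simp add: mat_simps proj_mult_proj_mult)
  finally show ?thesis .
qed

lemma pi_mat_unit_sandwich:
  assumes x: "x \<in> alg ns" and "r < bsize ns" and "r0 < bsize ns" and "blk ns r = blk ns r0"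
  shows "\<pi> (mat_unit (bsize ns) r r0) * \<pi> x * \<pi> (mat_unit (bsize ns) r0 r)
    = x $$ (r0, r0) \<cdot>\<^sub>m \<pi> (mat_unit (bsize ns) r r)"
proof -
  have units: "mat_unit (bsize ns) r r0 \<in> alg ns" "mat_unit (bsize ns) r0 r \<in> alg ns"
    "mat_unit (bsize ns) r r \<in> alg ns"
    using assms by (auto intro: mat_unit_alg)
  then have "\<pi> (mat_unit (bsize ns) r r0) * \<pi> x * \<pi> (mat_unit (bsize ns) r0 r)
      = \<pi> (mat_unit (bsize ns) r r0 * x * mat_unit (bsize ns) r0 r)"
    using x by (simp add: pi_mult)
  also have "\<dots> = x $$ (r0, r0) \<cdot>\<^sub>m \<pi> (mat_unit (bsize ns) r r)"
    using mat_unit_sandwich[OF alg_carrier[OF x], of r0 r0 r r] assms units by (simp add: pi_smult)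
  finally show ?thesis .
qed

text \<open>Sandwiching \<open>\<gamma> = \<Sum> \<pi>(x) \<pi>\<^sup>0(y)\<close> between the matrix units \<open>E\<^sub>r\<^sub>r\<^sub>0\<close> and \<open>E\<^sub>r\<^sub>0\<^sub>r\<close>
  of one block replaces each \<open>\<pi>(x)\<close> by the scalar \<open>x\<^sub>r\<^sub>0\<^sub>r\<^sub>0\<close>.\<close>

lemma grading_mult_mat_unit:
  assumes xys: "set xys \<subseteq> alg ns \<times> alg ns"
    and \<gamma>: "\<gamma> = msum m (map (\<lambda>(x, y). \<pi> x * pi0_mat y) xys)"
    and r: "r < bsize ns" and r0: "r0 < bsize ns" and blk: "blk ns r = blk ns r0"
  defines "E \<equiv> \<lambda>r s. \<pi> (mat_unit (bsize ns) r s)"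
  shows "\<gamma> * E r r = msum m (map (\<lambda>(x, y). x $$ (r0, r0) \<cdot>\<^sub>m pi0_mat y) xys) * E r r"
proof -
  define G where "G = msum m (map (\<lambda>(x, y). x $$ (r0, r0) \<cdot>\<^sub>m pi0_mat y) xys)"
  have units: "mat_unit (bsize ns) r r0 \<in> alg ns" "mat_unit (bsize ns) r0 r \<in> alg ns"
    "mat_unit (bsize ns) r r \<in> alg ns"
    using r r0 blk by (auto intro: mat_unit_alg)
  then have E: "E r r0 \<in> carrier_mat m m" "E r0 r \<in> carrier_mat m m" "E r r \<in> carrier_mat m m"
    unfolding E_def by simp_all
  have G_commute: "E r r * G = G * E r r"
  proof -
    have "E r r * (x $$ (r0, r0) \<cdot>\<^sub>m pi0_mat y) = (x $$ (r0, r0) \<cdot>\<^sub>m pi0_mat y) * E r r"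
      if "(x, y) \<in> set xys" for x y
      using that xys units unfolding E_def by (auto simp: mat_simps pi0_mat_commute_pi)
    then show ?thesis unfolding G_def using E by (intro commute_msum) auto
  qed
  have Ms: "\<forall>M\<in>set (map (\<lambda>(x, y). \<pi> x * pi0_mat y) xys). M \<in> carrier_mat m m"
    using xys by (auto simp: subset_iff)
  have "\<gamma> * E r r = \<gamma> * (E r r0 * E r0 r)"
    using units r0 unfolding E_def by (simp add: pi_mult[symmetric] mat_unit_mult_mat_unit)
  also have "\<dots> = E r r0 * (\<gamma> * E r0 r)"
    using units E unfolding E_def by (intro mult_left_commute_mat[of _ m]) (simp_all add: grading_commute_pi)
  also have "\<dots> = msum m (map (\<lambda>(x, y). E r r0 * (\<pi> x * pi0_mat y * E r0 r)) xys)"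
    unfolding \<gamma> using Ms E
    by (simp add: mult_msum_right mult_msum_left[where Ms = "map _ _"] o_def case_prod_beta')
  also have "\<dots> = msum m (map (\<lambda>(x, y). E r r * (x $$ (r0, r0) \<cdot>\<^sub>m pi0_mat y)) xys)"
  proof (rule arg_cong[where f = "msum m"], rule map_cong[OF refl])
    fix q assume "q \<in> set xys"
    with xys obtain x y where q: "q = (x, y)" and x: "x \<in> alg ns" and y: "y \<in> alg ns"
      by (cases q) auto
    have "E r r0 * (\<pi> x * pi0_mat y * E r0 r) = E r r0 * \<pi> x * E r0 r * pi0_mat y"
      using x y units unfolding E_def by (simp add: mat_simps pi0_mat_commute_pi)
    also have "\<dots> = E r r * (x $$ (r0, r0) \<cdot>\<^sub>m pi0_mat y)"
      unfolding E_def pi_mat_unit_sandwich[OF x r r0 blk] using units by (simp add: mat_simps)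
    finally show "(\<lambda>(x, y). E r r0 * (\<pi> x * pi0_mat y * E r0 r)) q
        = (\<lambda>(x, y). E r r * (x $$ (r0, r0) \<cdot>\<^sub>m pi0_mat y)) q"
      unfolding q by simp
  qed
  also have "\<dots> = E r r * G"
    unfolding G_def using E by (simp add: mult_msum_left o_def case_prod_beta')
  also have "\<dots> = G * E r r"
    by (rule G_commute)
  finally show ?thesis
    unfolding G_def .
qed

lemma grading_on_block:
  "\<exists>cys. snd ` set cys \<subseteq> alg ns \<and>
     \<gamma> * proj i = msum m (map (\<lambda>(c, y). c \<cdot>\<^sub>m pi0_mat y) cys) * proj i"
proof -
  obtain xys where xys: "set xys \<subseteq> alg ns \<times> alg ns"
    and \<gamma>: "\<gamma> = msum m (map (\<lambda>(x, y). \<pi> x * pi0_mat y) xys)"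
    using grading_eq_msum by blast
  define rs where "rs = filter (\<lambda>r. blk ns r = i) [0..<bsize ns]"
  have units: "\<forall>r\<in>set rs. mat_unit (bsize ns) r r \<in> alg ns"
    unfolding rs_def by (auto intro: mat_unit_alg)
  have proj: "proj i = msum m (map (\<lambda>r. \<pi> (mat_unit (bsize ns) r r)) rs)"
    unfolding rs_def Pblk_eq_msum_mat_unit[of ns i] using units by (simp add: pi_msum rs_def)
  show ?thesis
  proof (cases "rs = []")
    case True
    then show ?thesis by (intro exI[of _ "[]"]) (simp add: proj)
  next
    case False
    define r0 where "r0 = hd rs"
    have r0: "r0 < bsize ns" "blk ns r0 = i"
      using hd_in_set[OF False] unfolding r0_def rs_def by auto
    define cys where "cys = map (\<lambda>(x, y). (x $$ (r0, r0), y)) xys"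
    define G where "G = msum m (map (\<lambda>(c, y). c \<cdot>\<^sub>m pi0_mat y) cys)"
    have G_carrier: "G \<in> carrier_mat m m" unfolding G_def by auto
    have G: "G = msum m (map (\<lambda>(x, y). x $$ (r0, r0) \<cdot>\<^sub>m pi0_mat y) xys)"
      unfolding G_def cys_def by (simp add: o_def case_prod_beta')
    have "\<gamma> * proj i = msum m (map (\<lambda>r. \<gamma> * \<pi> (mat_unit (bsize ns) r r)) rs)"
      unfolding proj using units by (simp add: mult_msum_left o_def)
    also have "\<dots> = msum m (map (\<lambda>r. G * \<pi> (mat_unit (bsize ns) r r)) rs)"
      unfolding G using r0 grading_mult_mat_unit[OF xys \<gamma>, unfolded]
      by (intro arg_cong[where f = "msum m"] map_cong) (auto simp: rs_def)
    also have "\<dots> = G * proj i"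
      unfolding proj using units by (simp add: mult_msum_left[OF G_carrier] o_def)
    finally have "\<gamma> * proj i = G * proj i" .
    moreover have "snd ` set cys \<subseteq> alg ns" using xys by (auto simp: cys_def)
    ultimately show ?thesis unfolding G_def by (intro exI[of _ cys] conjI)
  qed
qed

lemma compression_commute_grading:
  fixes i :: nat
  assumes C: "C \<in> carrier_mat m m" and C_pi0: "\<And>y. y \<in> alg ns \<Longrightarrow> pi0_mat y * C = C * pi0_mat y"
  defines "X \<equiv> proj i * C * proj i"
  shows "\<gamma> * X = X * \<gamma>"
proof -
  have X: "X \<in> carrier_mat m m" unfolding X_def using C by simp
  obtain cys where cys: "snd ` set cys \<subseteq> alg ns"
    and \<gamma>_block: "\<gamma> * proj i = msum m (map (\<lambda>(c, y). c \<cdot>\<^sub>m pi0_mat y) cys) * proj i"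
    using grading_on_block by blast
  define G where "G = msum m (map (\<lambda>(c, y). c \<cdot>\<^sub>m pi0_mat y) cys)"
  have G: "G \<in> carrier_mat m m" unfolding G_def by auto
  have X_pi0_mat: "X * pi0_mat y = pi0_mat y * X" if y: "y \<in> alg ns" for y
  proof -
    have PC: "pi0_mat y * (proj i * C) = proj i * C * pi0_mat y"
      by (rule commute_mult_mat[of _ m]) (use y C C_pi0 in \<open>simp_all add: pi0_mat_commute_pi\<close>)
    have "pi0_mat y * (proj i * C * proj i) = proj i * C * proj i * pi0_mat y"
      by (rule commute_mult_mat[of _ m]) (use y C PC in \<open>simp_all add: pi0_mat_commute_pi\<close>)
    then show ?thesis unfolding X_def ..
  qed
  have X_G: "X * G = G * X"
    unfolding G_def using X cys X_pi0_mat by (intro commute_msum) (auto simp: mat_simps)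
  have X_proj: "X * proj i = X" "proj i * X = X"
    unfolding X_def using C by (simp_all add: mat_simps proj_idem proj_mult_proj_mult)
  have "\<gamma> * X = \<gamma> * proj i * X"
    using X by (simp add: mat_simps X_proj)
  also have "\<dots> = G * X"
    unfolding \<gamma>_block G_def[symmetric] using X G by (simp add: mat_simps X_proj)
  also have "\<dots> = G * (X * proj i)"
    by (simp only: X_proj)
  also have "\<dots> = X * (\<gamma> * proj i)"
    unfolding \<gamma>_block G_def[symmetric] using mult_left_commute_mat[OF X G pi_carrier[OF Pblk_alg] X_G] ..
  also have "\<dots> = X * proj i * \<gamma>"
    using X by (simp add: mat_simps grading_commute_pi)
  finally show ?thesis by (simp only: X_proj)
qed

lemma compression_comm_D_zero:
  assumes a: "a \<in> alg ns"
  shows "proj i * comm D (\<pi> a) * proj i = 0\<^sub>m m m"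
proof -
  define C where "C = comm D (\<pi> a)"
  define X where "X = proj i * C * proj i"
  have C: "C \<in> carrier_mat m m" unfolding C_def using a by simp
  have X: "X \<in> carrier_mat m m" unfolding X_def using C by simp
  have "X * \<gamma> = proj i * (C * \<gamma>) * proj i"
    unfolding X_def using C by (simp add: mat_simps grading_commute_pi)
  also have "C * \<gamma> = - (\<gamma> * C)"
    unfolding C_def using comm_D_anticommute_grading[OF a] .
  also have "proj i * (- (\<gamma> * C)) * proj i = - (proj i * \<gamma> * C * proj i)"
    using C by (simp add: mat_simps)
  also have "proj i * \<gamma> = \<gamma> * proj i"
    by (simp add: grading_commute_pi)
  also have "- (\<gamma> * proj i * C * proj i) = - (\<gamma> * X)"
    unfolding X_def using C by (simp add: mat_simps)
  finally have "\<gamma> * X = - (\<gamma> * X)"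
    using compression_commute_grading[OF C, of i] a unfolding C_def X_def
    by (simp add: pi0_mat_commute_comm)
  then have "\<gamma> * X = 0\<^sub>m m m"
    using X by (intro eq_uminus_self_mat) simp_all
  then have "\<gamma> * (\<gamma> * X) = 0\<^sub>m m m" by simp
  then show ?thesis
    unfolding X_def[symmetric] C_def[symmetric] using X
    by (simp add: grading_square flip: assoc_mult_mat[of _ m m _ m _ m])
qed

subsection \<open>The off-diagonal part of the Dirac operator\<close>

definition D_diag :: "complex mat" where
  "D_diag = msum m (map (\<lambda>i. proj i * D * proj i) [0..<length ns])"

definition D_off :: "complex mat" where
  "D_off = D - D_diag"

lemma D_diag_carrier[simp]: "D_diag \<in> carrier_mat m m"
  unfolding D_diag_def by auto

lemma D_diag_dims[simp]: "dim_row D_diag = m" "dim_col D_diag = m"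
  using D_diag_carrier by blast+

lemma D_off_carrier[simp]: "D_off \<in> carrier_mat m m"
  unfolding D_off_def by simp

lemma D_off_dims[simp]: "dim_row D_off = m" "dim_col D_off = m"
  using D_off_carrier by blast+

lemma D_diag_commute_pi:
  assumes a: "a \<in> alg ns"
  shows "D_diag * \<pi> a = \<pi> a * D_diag"
proof -
  have A: "\<pi> a \<in> carrier_mat m m" using a by simp
  have "proj i * D * proj i * \<pi> a = \<pi> a * (proj i * D * proj i)" for i
  proof -
    have "proj i * D * proj i * \<pi> a = proj i * (D * \<pi> a) * proj i"
      using A by (simp add: mat_simps proj_commute[OF a])
    also have "D * \<pi> a = comm D (\<pi> a) + \<pi> a * D"
      unfolding comm_def using A by (auto intro: eq_matI)
    also have "proj i * (comm D (\<pi> a) + \<pi> a * D) * proj i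
        = proj i * comm D (\<pi> a) * proj i + proj i * \<pi> a * D * proj i"
      using A by (simp add: mat_simps)
    also have "proj i * \<pi> a * D * proj i = \<pi> a * (proj i * D * proj i)"
      using A by (simp add: mat_simps proj_commute[OF a])
    finally show ?thesis using A by (simp add: compression_comm_D_zero[OF a])
  qed
  then show ?thesis
    unfolding D_diag_def using A by (intro commute_msum[symmetric]) auto
qed

lemma comm_D_eq_comm_D_off:
  assumes a: "a \<in> alg ns"
  shows "comm D (\<pi> a) = comm D_off (\<pi> a)"
proof -
  have "comm D_off (\<pi> a) = (D * \<pi> a - D_diag * \<pi> a) - (\<pi> a * D - \<pi> a * D_diag)"
    unfolding comm_def D_off_def using a by (simp add: mat_simps)
  also have "\<dots> = comm D (\<pi> a)"
    unfolding comm_def D_diag_commute_pi[OF a] by (rule eq_matI) (use a in auto)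
  finally show ?thesis ..
qed

lemma proj_D_off_proj:
  assumes i: "i < length ns"
  shows "proj i * D_off * proj i = 0\<^sub>m m m"
proof -
  have "proj i * D_diag * proj i = proj i * D * proj i * proj i"
    unfolding D_diag_def using msum_proj_sandwich[OF D_carrier i] by simp
  also have "\<dots> = proj i * D * proj i"
    by (simp add: mat_simps proj_idem)
  finally have "proj i * D_diag * proj i = proj i * D * proj i" .
  then show ?thesis
    unfolding D_off_def by (simp add: mat_simps)
qed

subsection \<open>Representing universal forms\<close>

definition comm_prod :: "complex mat list \<Rightarrow> complex mat" where
  "comm_prod as = foldr (\<lambda>a M. comm D (\<pi> a) * M) as (1\<^sub>m m)"

lemma comm_prod_Nil[simp]: "comm_prod [] = 1\<^sub>m m"
  by (simp add: comm_prod_def)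

lemma comm_prod_Cons[simp]: "comm_prod (a # as) = comm D (\<pi> a) * comm_prod as"
  by (simp add: comm_prod_def)

lemma comm_prod_carrier[simp]: "set as \<subseteq> alg ns \<Longrightarrow> comm_prod as \<in> carrier_mat m m"
  by (induct as) auto

lemma comm_prod_dims[simp]:
  "set as \<subseteq> alg ns \<Longrightarrow> dim_row (comm_prod as) = m"
  "set as \<subseteq> alg ns \<Longrightarrow> dim_col (comm_prod as) = m"
  using comm_prod_carrier by blast+

lemma comm_prod_append:
  "set as \<subseteq> alg ns \<Longrightarrow> set bs \<subseteq> alg ns \<Longrightarrow> comm_prod (as @ bs) = comm_prod as * comm_prod bs"
  by (induct as) (simp_all add: mat_simps)

lemma piword_eq: "piword m \<pi> D w = \<pi> (hd w) * comm_prod (tl w)"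
  by (simp add: piword_def comm_prod_def)

lemma piform_eq_msum: "piform m \<pi> D u = msum m (map (piword m \<pi> D) u)"
  by (simp add: piform_def msum_def foldr_map o_def)

lemma is_uform_wordE:
  assumes "is_uform ns n u" and "w \<in> set u"
  obtains a as where "w = a # as" and "a \<in> alg ns" and "set as \<subseteq> alg ns" and "length as = n"
  using assms unfolding is_uform_def by (cases w) auto

lemma is_uform_single[simp]: "is_uform ns n [w] \<longleftrightarrow> length w = Suc n \<and> set w \<subseteq> alg ns"
  by (simp add: is_uform_def)

lemma is_uform_map: "is_uform ns n (map f u) \<longleftrightarrow> (\<forall>w\<in>set u. is_uform ns n [f w])"
  by (simp add: is_uform_def)

lemma is_uform_Nil[simp]: "is_uform ns n []"
  by (simp add: is_uform_def)

lemma is_uform_append[simp]: "is_uform ns n (u @ v) \<longleftrightarrow> is_uform ns n u \<and> is_uform ns n v"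
  by (auto simp: is_uform_def)

lemma is_uform_concat[simp]: "is_uform ns n (concat us) \<longleftrightarrow> (\<forall>u\<in>set us. is_uform ns n u)"
  by (auto simp: is_uform_def)

lemma piword_carrier: "is_uform ns n u \<Longrightarrow> \<forall>w\<in>set u. piword m \<pi> D w \<in> carrier_mat m m"
  by (auto elim!: is_uform_wordE simp: piword_eq)

lemma piform_carrier[simp]: "is_uform ns n u \<Longrightarrow> piform m \<pi> D u \<in> carrier_mat m m"
  unfolding piform_eq_msum by (intro msum_carrier) (auto dest: piword_carrier)

lemma piform_Nil[simp]: "piform m \<pi> D [] = 0\<^sub>m m m"
  by (simp add: piform_eq_msum)

lemma piform_append:
  "is_uform ns n u \<Longrightarrow> is_uform ns n v \<Longrightarrow> piform m \<pi> D (u @ v) = piform m \<pi> D u + piform m \<pi> D v"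
  unfolding piform_eq_msum map_append by (rule msum_append) (auto dest!: piword_carrier)

lemma piform_concat:
  "\<forall>x\<in>set xs. is_uform ns n (f x) \<Longrightarrow>
    piform m \<pi> D (concat (map f xs)) = msum m (map (\<lambda>x. piform m \<pi> D (f x)) xs)"
  by (induct xs) (simp_all add: piform_append[where n = n])

lemma piform_map:
  "\<forall>w\<in>set u. f w \<in> carrier_mat m m \<Longrightarrow> \<forall>w\<in>set u. piword m \<pi> D (g w) = f w \<Longrightarrow>
    piform m \<pi> D (map g u) = msum m (map f u)"
  unfolding piform_eq_msum by (simp add: o_def cong: map_cong)

lemma rmul_step_uform:
  assumes "is_uform ns k R" and "x \<in> alg ns" and "a \<in> alg ns"
  shows "\<forall>c\<in>set R. is_uform ns (Suc k) [x # (a * hd c) # tl c, (- (x * a)) # c]"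
proof
  fix c assume "c \<in> set R"
  with assms(1) obtain c0 cs where "c = c0 # cs" "c0 \<in> alg ns" "set cs \<subseteq> alg ns" "length cs = k"
    by (rule is_uform_wordE)
  with assms(2,3) show "is_uform ns (Suc k) [x # (a * hd c) # tl c, (- (x * a)) # c]"
    unfolding is_uform_def by auto
qed

lemma rmul_uform:
  "x \<in> alg ns \<Longrightarrow> set as \<subseteq> alg ns \<Longrightarrow> b \<in> alg ns \<Longrightarrow> is_uform ns (length as) (rmul ns x as b)"
proof (induct as arbitrary: x)
  case Nil
  then show ?case by (simp add: is_uform_def)
next
  case (Cons a as)
  then have "is_uform ns (length as) (rmul ns (1\<^sub>m (bsize ns)) as b)" by simp
  with Cons.prems show ?case by (simp add: rmul_step_uform)
qed

text \<open>The words produced by one step of the Leibniz rule \<open>da b = d(ab) - a db\<close>, by which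
  \<open>rmul\<close> normalises products, represent the same operator because \<open>[D, -]\<close> is a derivation.\<close>

lemma piform_leibniz_pair:
  assumes x: "x \<in> alg ns" and a: "a \<in> alg ns" and c0: "c0 \<in> alg ns" and cs: "set cs \<subseteq> alg ns"
  shows "piform m \<pi> D [x # (a * c0) # cs, (- (x * a)) # c0 # cs]
    = \<pi> x * comm D (\<pi> a) * piword m \<pi> D (c0 # cs)"
proof -
  define A where "A = \<pi> a"
  define C0 where "C0 = \<pi> c0"
  define F where "F = comm_prod cs"
  have carrier: "\<pi> x \<in> carrier_mat m m" "A \<in> carrier_mat m m" "C0 \<in> carrier_mat m m"
    "comm D C0 \<in> carrier_mat m m" "comm D A \<in> carrier_mat m m" "F \<in> carrier_mat m m"
    unfolding A_def C0_def F_def using x a c0 cs by auto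
  have "piform m \<pi> D [x # (a * c0) # cs, (- (x * a)) # c0 # cs]
      = \<pi> x * ((comm D A * C0 + A * comm D C0) * F) + (- (\<pi> x * A)) * (comm D C0 * F)"
    unfolding A_def C0_def F_def using a c0 cs x
    by (simp add: piform_eq_msum piword_eq pi_mult pi_uminus comm_mult[of _ m])
  also have "\<dots> = \<pi> x * comm D A * (C0 * F)"
    using carrier by (simp add: mat_simps) (auto intro: eq_matI)
  finally show ?thesis
    unfolding A_def C0_def F_def by (simp add: piword_eq)
qed

lemma piform_rmul:
  "x \<in> alg ns \<Longrightarrow> set as \<subseteq> alg ns \<Longrightarrow> b \<in> alg ns \<Longrightarrow>
    piform m \<pi> D (rmul ns x as b) = \<pi> x * comm_prod as * \<pi> b"
proof (induct as arbitrary: x)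
  case Nil
  then show ?case by (simp add: piform_eq_msum piword_eq pi_mult)
next
  case (Cons a as)
  define R where "R = rmul ns (1\<^sub>m (bsize ns)) as b"
  have a: "a \<in> alg ns" and as: "set as \<subseteq> alg ns" and x: "x \<in> alg ns" and b: "b \<in> alg ns"
    using Cons.prems by auto
  have R: "is_uform ns (length as) R"
    unfolding R_def using rmul_uform[OF alg_one as b] .
  have piform_R: "piform m \<pi> D R = comm_prod as * \<pi> b"
    unfolding R_def using Cons.hyps[OF alg_one as b] as b by simp
  have word: "piform m \<pi> D [x # (a * hd c) # tl c, (- (x * a)) # c] = \<pi> x * comm D (\<pi> a) * piword m \<pi> D c"
    if "c \<in> set R" for c
  proof -
    from R that obtain c0 cs where "c = c0 # cs" "c0 \<in> alg ns" "set cs \<subseteq> alg ns"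
      by (rule is_uform_wordE)
    with x a show ?thesis by (simp add: piform_leibniz_pair)
  qed
  have "piform m \<pi> D (rmul ns x (a # as) b)
      = piform m \<pi> D (concat (map (\<lambda>c. [x # (a * hd c) # tl c, (- (x * a)) # c]) R))"
    by (simp add: R_def)
  also have "\<dots> = msum m (map (\<lambda>c. piform m \<pi> D [x # (a * hd c) # tl c, (- (x * a)) # c]) R)"
    using rmul_step_uform[OF R x a] by (simp add: piform_concat[where n = "Suc (length as)"])
  also have "\<dots> = msum m (map (\<lambda>c. \<pi> x * comm D (\<pi> a) * piword m \<pi> D c) R)"
    using word by (simp cong: map_cong)
  also have "\<dots> = \<pi> x * comm D (\<pi> a) * piform m \<pi> D R"
    unfolding piform_eq_msum using piword_carrier[OF R] x a by (simp add: mult_msum_left o_def)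
  also have "\<dots> = \<pi> x * comm_prod (a # as) * \<pi> b"
    unfolding piform_R using x a as b by (simp add: mat_simps)
  finally show ?case .
qed

lemma wmul_uform:
  assumes "is_uform ns n [w]" and "is_uform ns k [v]"
  shows "is_uform ns (n + k) (wmul ns w v)"
proof -
  obtain a as where w: "w = a # as" "a \<in> alg ns" "set as \<subseteq> alg ns" "length as = n"
    using assms(1) by (rule is_uform_wordE) simp
  obtain b bs where v: "v = b # bs" "b \<in> alg ns" "set bs \<subseteq> alg ns" "length bs = k"
    using assms(2) by (rule is_uform_wordE) simp
  show ?thesis
    using rmul_uform[of a as b] w v unfolding wmul_def is_uform_map
    by (auto elim!: is_uform_wordE)
qed

lemma piform_wmul:
  assumes "is_uform ns n [w]" and "is_uform ns k [v]"
  shows "piform m \<pi> D (wmul ns w v) = piword m \<pi> D w * piword m \<pi> D v"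
proof -
  obtain a as where w: "w = a # as" "a \<in> alg ns" "set as \<subseteq> alg ns"
    using assms(1) by (rule is_uform_wordE) simp
  obtain b bs where v: "v = b # bs" "b \<in> alg ns" "set bs \<subseteq> alg ns"
    using assms(2) by (rule is_uform_wordE) simp
  define R where "R = rmul ns a as b"
  have R: "is_uform ns (length as) R"
    unfolding R_def using rmul_uform w v by simp
  have "piform m \<pi> D (wmul ns w v) = msum m (map (\<lambda>c. piword m \<pi> D c * comm_prod bs) R)"
    unfolding wmul_def w v R_def[symmetric] list.sel
  proof (rule piform_map)
    show "\<forall>c\<in>set R. piword m \<pi> D (c @ bs) = piword m \<pi> D c * comm_prod bs"
      using R v by (auto elim!: is_uform_wordE simp: piword_eq comm_prod_append mat_simps)
  qed (use piword_carrier[OF R] v in auto)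
  also have "\<dots> = piform m \<pi> D R * comm_prod bs"
    unfolding piform_eq_msum using piword_carrier[OF R] v by (simp add: mult_msum_right o_def)
  also have "\<dots> = piword m \<pi> D w * piword m \<pi> D v"
    unfolding R_def using w v by (simp add: piform_rmul piword_eq mat_simps)
  finally show ?thesis .
qed

lemma umul_uform:
  assumes "is_uform ns n u" and "is_uform ns k v"
  shows "is_uform ns (n + k) (umul ns u v)"
proof -
  have "is_uform ns (n + k) (wmul ns w w')" if "w \<in> set u" "w' \<in> set v" for w w'
    using assms that by (intro wmul_uform) (simp_all add: is_uform_def)
  then show ?thesis unfolding umul_def by simp
qed

lemma piform_umul:
  assumes u: "is_uform ns n u" and v: "is_uform ns k v"
  shows "piform m \<pi> D (umul ns u v) = piform m \<pi> D u * piform m \<pi> D v"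
proof -
  have single: "is_uform ns n [w]" if "w \<in> set u" for w
    using u that by (simp add: is_uform_def)
  have single': "is_uform ns k [w']" if "w' \<in> set v" for w'
    using v that by (simp add: is_uform_def)
  have row: "piform m \<pi> D (concat (map (wmul ns w) v)) = piword m \<pi> D w * piform m \<pi> D v"
    if w: "w \<in> set u" for w
  proof -
    have "piform m \<pi> D (concat (map (wmul ns w) v)) = msum m (map (\<lambda>w'. piform m \<pi> D (wmul ns w w')) v)"
      using wmul_uform[OF single[OF w] single'] by (simp add: piform_concat[where n = "n + k"])
    also have "\<dots> = msum m (map (\<lambda>w'. piword m \<pi> D w * piword m \<pi> D w') v)"
      using piform_wmul[OF single[OF w] single'] by (intro arg_cong[where f = "msum m"] map_cong) simp_all
    also have "\<dots> = piword m \<pi> D w * piform m \<pi> D v"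
      unfolding piform_eq_msum using piword_carrier[OF u] piword_carrier[OF v] w
      by (simp add: mult_msum_left o_def)
    finally show ?thesis .
  qed
  have "piform m \<pi> D (umul ns u v) = msum m (map (\<lambda>w. piform m \<pi> D (concat (map (wmul ns w) v))) u)"
    unfolding umul_def using wmul_uform[OF single single']
    by (simp add: piform_concat[where n = "n + k"])
  also have "\<dots> = msum m (map (\<lambda>w. piword m \<pi> D w * piform m \<pi> D v) u)"
    using row by (intro arg_cong[where f = "msum m"] map_cong) simp_all
  also have "\<dots> = piform m \<pi> D u * piform m \<pi> D v"
    unfolding piform_eq_msum using piword_carrier[OF u] piword_carrier[OF v]
    by (simp add: mult_msum_right o_def)
  finally show ?thesis .
qed

lemma uadd_uform[simp]: "is_uform ns n (uadd u v) \<longleftrightarrow> is_uform ns n u \<and> is_uform ns n v"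
  by (simp add: uadd_def)

lemma piform_uadd:
  "is_uform ns n u \<Longrightarrow> is_uform ns n v \<Longrightarrow> piform m \<pi> D (uadd u v) = piform m \<pi> D u + piform m \<pi> D v"
  by (simp add: uadd_def piform_append)

lemma uneg_uform[simp]: "is_uform ns n u \<Longrightarrow> is_uform ns n (uneg u)"
  unfolding uneg_def is_uform_map by (auto elim!: is_uform_wordE)

lemma piform_uneg:
  assumes u: "is_uform ns n u"
  shows "piform m \<pi> D (uneg u) = - piform m \<pi> D u"
proof -
  have "piform m \<pi> D (uneg u) = msum m (map (\<lambda>w. - piword m \<pi> D w) u)"
    unfolding uneg_def
    by (rule piform_map) (use u in \<open>auto elim!: is_uform_wordE simp: piword_eq pi_uminus\<close>)
  also have "\<dots> = - piform m \<pi> D u"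
    unfolding piform_eq_msum using piword_carrier[OF u] by (simp add: msum_map_uminus)
  finally show ?thesis .
qed

lemma usub_uform[simp]: "is_uform ns n u \<Longrightarrow> is_uform ns n v \<Longrightarrow> is_uform ns n (usub u v)"
  by (simp add: usub_def)

lemma piform_usub:
  "is_uform ns n u \<Longrightarrow> is_uform ns n v \<Longrightarrow> piform m \<pi> D (usub u v) = piform m \<pi> D u - piform m \<pi> D v"
  by (simp add: usub_def piform_uadd piform_uneg) (auto intro: eq_matI)

lemma ud_uform[simp]: "is_uform ns n u \<Longrightarrow> is_uform ns (Suc n) (ud ns u)"
  unfolding ud_def is_uform_map by (auto elim!: is_uform_wordE)

lemma piform_ud:
  assumes "is_uform ns n u"
  shows "piform m \<pi> D (ud ns u) = msum m (map comm_prod u)"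
  unfolding ud_def
  by (rule piform_map) (use assms in \<open>auto elim!: is_uform_wordE simp: piword_eq\<close>)

lemma piform_ud_uadd:
  assumes "is_uform ns n u" and "is_uform ns n v"
  shows "piform m \<pi> D (ud ns (uadd u v)) = piform m \<pi> D (ud ns u) + piform m \<pi> D (ud ns v)"
proof -
  have "ud ns (uadd u v) = ud ns u @ ud ns v" by (simp add: uadd_def ud_def)
  then show ?thesis using piform_append[OF ud_uform ud_uform] assms by simp
qed

lemma piform_ud_uneg:
  assumes u: "is_uform ns n u"
  shows "piform m \<pi> D (ud ns (uneg u)) = - piform m \<pi> D (ud ns u)"
proof -
  have "piform m \<pi> D (ud ns (uneg u)) = msum m (map comm_prod (uneg u))"
    by (rule piform_ud[OF uneg_uform[OF u]])
  also have "map comm_prod (uneg u) = map (\<lambda>w. - comm_prod w) u"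
    using u by (auto simp: uneg_def pi_uminus comm_uminus[of _ m] elim!: is_uform_wordE)
  also have "msum m \<dots> = - msum m (map comm_prod u)"
    using u by (intro msum_map_uminus) (auto elim!: is_uform_wordE)
  also have "\<dots> = - piform m \<pi> D (ud ns u)"
    by (simp add: piform_ud[OF u])
  finally show ?thesis .
qed

lemma piform_ud_usub:
  "is_uform ns n u \<Longrightarrow> is_uform ns n v \<Longrightarrow>
    piform m \<pi> D (ud ns (usub u v)) = piform m \<pi> D (ud ns u) - piform m \<pi> D (ud ns v)"
  unfolding usub_def by (simp add: piform_ud_uadd piform_ud_uneg) (auto intro: eq_matI)

lemma omega_eq_if_piform_eq:
  assumes "is_uform ns n u" and "is_uform ns n v" and "piform m \<pi> D u = piform m \<pi> D v"
  shows "omega_eq ns m \<pi> D n u v"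
  unfolding omega_eq_def
proof (intro exI[of _ "[]"] conjI)
  have "usub (usub u v) (ud ns []) = usub u v"
    by (simp add: usub_def uadd_def uneg_def ud_def)
  then show "piform m \<pi> D (usub (usub u v) (ud ns [])) = 0\<^sub>m m m"
    using assms by (simp add: piform_usub)
qed simp_all

definition block_diagonal :: "complex mat \<Rightarrow> bool" where
  "block_diagonal X \<longleftrightarrow> msum m (map (\<lambda>i. proj i * X * proj i) [0..<length ns]) = X"

lemma block_diagonal_proj_mult:
  assumes "block_diagonal X" and "X \<in> carrier_mat m m" and "i < length ns"
  shows "proj i * X = proj i * X * proj i"
  using msum_proj_sandwich[OF assms(2,3)] assms(1) by (simp add: block_diagonal_def)

lemma xi_uform: "is_uform ns 1 (xi ns)"
  by (auto simp: xi_def is_uform_def)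

lemma msum_map_xi:
  fixes h :: "complex mat list \<Rightarrow> complex mat"
  assumes "\<And>i j. h [Pblk ns i, Pblk ns j] \<in> carrier_mat m m"
  shows "msum m (map h (xi ns)) = msum m (map (\<lambda>i.
    msum m (map (\<lambda>j. h [Pblk ns i, Pblk ns j]) [0..<length ns]) - h [Pblk ns i, Pblk ns i]) [0..<length ns])"
proof -
  have row: "msum m (concat (map (\<lambda>j. map h (if i \<noteq> j then [[Pblk ns i, Pblk ns j]] else [])) js))
      = msum m (map (\<lambda>j. if i \<noteq> j then h [Pblk ns i, Pblk ns j] else 0\<^sub>m m m) js)" for i js
    using assms by (induct js) (auto simp: msum_append)
  have "msum m (map h (xi ns)) = msum m (map (\<lambda>i. msum m (concat (map (\<lambda>j.
      map h (if i \<noteq> j then [[Pblk ns i, Pblk ns j]] else [])) [0..<length ns]))) [0..<length ns])"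
    unfolding xi_def map_concat using assms by (subst msum_concat) (auto simp: o_def map_concat)
  also have "\<dots> = msum m (map (\<lambda>i. msum m (map (\<lambda>j.
      if i \<noteq> j then h [Pblk ns i, Pblk ns j] else 0\<^sub>m m m) [0..<length ns])) [0..<length ns])"
    by (simp only: row)
  also have "\<dots> = msum m (map (\<lambda>i.
      msum m (map (\<lambda>j. h [Pblk ns i, Pblk ns j]) [0..<length ns]) - h [Pblk ns i, Pblk ns i]) [0..<length ns])"
    by (rule arg_cong[where f = "msum m"], rule map_cong[OF refl], rule msum_if_neq) (use assms in auto)
  finally show ?thesis .
qed

lemma msum_comm_D_proj: "msum m (map (\<lambda>j. comm D (proj j)) [0..<length ns]) = 0\<^sub>m m m"
  using comm_msum[OF D_carrier, of "[0..<length ns]" proj] by (simp add: msum_proj comm_one)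

lemma mult_msum_comm_D_proj:
  "A \<in> carrier_mat m m \<Longrightarrow> msum m (map (\<lambda>j. A * comm D (proj j)) [0..<length ns]) = 0\<^sub>m m m"
  using mult_msum_left[of A m "map (\<lambda>j. comm D (proj j)) [0..<length ns]"]
  by (simp add: msum_comm_D_proj o_def)

lemma piform_xi: "piform m \<pi> D (xi ns) = D_off"
proof -
  have "piform m \<pi> D (xi ns) = msum m (map (\<lambda>i. msum m (map (\<lambda>j. proj i * comm D (proj j))
      [0..<length ns]) - proj i * comm D (proj i)) [0..<length ns])"
    unfolding piform_eq_msum by (subst msum_map_xi) (simp_all add: piword_eq)
  also have "\<dots> = msum m (map (\<lambda>i. proj i * D - proj i * D * proj i) [0..<length ns])"
  proof (rule arg_cong[where f = "msum m"], rule map_cong[OF refl])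
    fix i
    have "proj i * comm D (proj i) = proj i * D * proj i - proj i * D"
      unfolding comm_def by (simp add: mat_simps proj_mult_proj_mult)
    then show "msum m (map (\<lambda>j. proj i * comm D (proj j)) [0..<length ns]) - proj i * comm D (proj i)
        = proj i * D - proj i * D * proj i"
      by (simp add: mult_msum_comm_D_proj) (auto intro: eq_matI)
  qed
  also have "\<dots> = msum m (map (\<lambda>i. proj i * D) [0..<length ns]) - D_diag"
    unfolding D_diag_def by (rule msum_map_minus) auto
  also have "msum m (map (\<lambda>i. proj i * D) [0..<length ns]) = D"
    using mult_msum_right[OF D_carrier, of "map proj [0..<length ns]"] by (simp add: msum_proj o_def)
  finally show ?thesis unfolding D_off_def .
qed

lemma piform_ud_xi:
  "piform m \<pi> D (ud ns (xi ns))
    = D_off * D_off + msum m (map (\<lambda>i. proj i * (D_off * D_off) * proj i) [0..<length ns])"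
proof -
  have "piform m \<pi> D (ud ns (xi ns)) = msum m (map (\<lambda>i. msum m (map (\<lambda>j. comm D (proj i) * comm D (proj j))
      [0..<length ns]) - comm D (proj i) * comm D (proj i)) [0..<length ns])"
    unfolding piform_ud[OF xi_uform] by (subst msum_map_xi) simp_all
  also have "\<dots> = msum m (map (\<lambda>i. D_off * proj i * D_off + proj i * (D_off * D_off) * proj i) [0..<length ns])"
  proof (rule arg_cong[where f = "msum m"], rule map_cong[OF refl])
    fix i assume "i \<in> set [0..<length ns]"
    then have "comm D (proj i) * comm D (proj i) = - (D_off * proj i * D_off) - proj i * (D_off * D_off) * proj i"
      unfolding comm_D_eq_comm_D_off[OF Pblk_alg]
      by (intro comm_square_of_idem) (auto simp: proj_idem proj_D_off_proj)
    then show "msum m (map (\<lambda>j. comm D (proj i) * comm D (proj j)) [0..<length ns]) - comm D (proj i) * comm D (proj i)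
        = D_off * proj i * D_off + proj i * (D_off * D_off) * proj i"
      by (simp add: mult_msum_comm_D_proj) (auto intro: eq_matI)
  qed
  also have "\<dots> = msum m (map (\<lambda>i. D_off * proj i * D_off) [0..<length ns])
      + msum m (map (\<lambda>i. proj i * (D_off * D_off) * proj i) [0..<length ns])"
    by (rule msum_map_add) auto
  also have "msum m (map (\<lambda>i. D_off * proj i * D_off) [0..<length ns]) = D_off * D_off"
    using mult_msum_left[OF D_off_carrier, of "map proj [0..<length ns]"]
      mult_msum_right[OF D_off_carrier, of "map (\<lambda>i. D_off * proj i) [0..<length ns]"]
    by (simp add: msum_proj o_def)
  finally show ?thesis .
qed

lemma piword_pair:
  assumes c0: "c0 \<in> alg ns" and c1: "c1 \<in> alg ns" and orth: "\<pi> c0 * \<pi> c1 = 0\<^sub>m m m"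
  shows "piword m \<pi> D [c0, c1] = \<pi> c0 * D_off * \<pi> c1"
proof -
  have "piword m \<pi> D [c0, c1] = \<pi> c0 * comm D_off (\<pi> c1)"
    using c1 by (simp add: piword_eq comm_D_eq_comm_D_off)
  also have "\<dots> = \<pi> c0 * D_off * \<pi> c1 - \<pi> c0 * \<pi> c1 * D_off"
    unfolding comm_def using c0 c1 by (simp add: mat_simps)
  finally show ?thesis
    unfolding orth using c0 c1 by (auto intro: eq_matI)
qed

lemma comm_prod_pair:
  assumes c0: "c0 \<in> alg ns" and c1: "c1 \<in> alg ns" and orth: "\<pi> c0 * \<pi> c1 = 0\<^sub>m m m"
    and orth2: "\<pi> c0 * (D_off * D_off) * \<pi> c1 = 0\<^sub>m m m"
  shows "comm_prod [c0, c1] = D_off * piword m \<pi> D [c0, c1] + piword m \<pi> D [c0, c1] * D_off"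
  using comm_mult_comm_of_orth[OF D_off_carrier pi_carrier[OF c0] pi_carrier[OF c1] orth orth2] c0 c1
  by (simp add: piword_pair[OF c0 c1 orth] comm_D_eq_comm_D_off)

lemma piform_ud_eq_D_off_anticomm:
  assumes u: "is_uform ns n u"
    and words: "\<forall>w\<in>set u. comm_prod w = D_off * piword m \<pi> D w + piword m \<pi> D w * D_off"
  shows "piform m \<pi> D (ud ns u) = D_off * piform m \<pi> D u + piform m \<pi> D u * D_off"
proof -
  have "piform m \<pi> D (ud ns u) = msum m (map (\<lambda>w. D_off * piword m \<pi> D w + piword m \<pi> D w * D_off) u)"
    unfolding piform_ud[OF u] using words by (simp cong: map_cong)
  also have "\<dots> = D_off * piform m \<pi> D u + piform m \<pi> D u * D_off"
    unfolding piform_eq_msum using piword_carrier[OF u]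
    by (simp add: msum_map_add mult_msum_left mult_msum_right o_def)
  finally show ?thesis .
qed

text \<open>In the universal algebra \<open>\<Sum>\<^sub>i x P\<^sub>i d((1 - P\<^sub>i) y) = x \<xi> y\<close>.\<close>

definition xi_sandwich :: "complex mat \<Rightarrow> complex mat \<Rightarrow> uform" where
  "xi_sandwich x y = map (\<lambda>i. [x * Pblk ns i, (1\<^sub>m (bsize ns) - Pblk ns i) * y]) [0..<length ns]"

lemma xi_sandwich_uform: "x \<in> alg ns \<Longrightarrow> y \<in> alg ns \<Longrightarrow> is_uform ns 1 (xi_sandwich x y)"
  unfolding xi_sandwich_def is_uform_def by auto

lemma xi_sandwich_word:
  assumes "x \<in> alg ns" and "y \<in> alg ns" and "i < length ns"
  defines "w \<equiv> [x * Pblk ns i, (1\<^sub>m (bsize ns) - Pblk ns i) * y]"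
  shows "block_diagonal (D_off * D_off) \<Longrightarrow> comm_prod w = D_off * piword m \<pi> D w + piword m \<pi> D w * D_off"
    and "piword m \<pi> D w = \<pi> x * (proj i * D_off) * \<pi> y"
proof -
  have c0: "x * Pblk ns i \<in> alg ns" and c1: "(1\<^sub>m (bsize ns) - Pblk ns i) * y \<in> alg ns"
    using assms by auto
  have pi_c0: "\<pi> (x * Pblk ns i) = \<pi> x * proj i"
    using assms by (simp add: pi_mult)
  have pi_c1: "\<pi> ((1\<^sub>m (bsize ns) - Pblk ns i) * y) = (1\<^sub>m m - proj i) * \<pi> y"
    using assms by (simp add: pi_mult pi_minus)
  have compress: "\<pi> (x * Pblk ns i) * Z * \<pi> ((1\<^sub>m (bsize ns) - Pblk ns i) * y) = \<pi> x * (proj i * Z - proj i * Z * proj i) * \<pi> y"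
    if "Z \<in> carrier_mat m m" for Z
    unfolding pi_c0 pi_c1 using assms that by (simp add: mat_simps)
  have orth: "\<pi> (x * Pblk ns i) * \<pi> ((1\<^sub>m (bsize ns) - Pblk ns i) * y) = 0\<^sub>m m m"
  proof -
    have "proj i - proj i = 0\<^sub>m m m" by (auto intro: eq_matI)
    with compress[of "1\<^sub>m m"] assms show ?thesis by (simp add: proj_idem)
  qed
  have "piword m \<pi> D w = \<pi> x * (proj i * D_off - proj i * D_off * proj i) * \<pi> y"
    unfolding w_def piword_pair[OF c0 c1 orth] compress[OF D_off_carrier] ..
  also have "proj i * D_off - proj i * D_off * proj i = proj i * D_off"
    unfolding proj_D_off_proj[OF \<open>i < length ns\<close>] by (auto intro: eq_matI)
  finally show "piword m \<pi> D w = \<pi> x * (proj i * D_off) * \<pi> y" .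
  show "comm_prod w = D_off * piword m \<pi> D w + piword m \<pi> D w * D_off"
    if "block_diagonal (D_off * D_off)"
  proof -
    from that have "\<pi> (x * Pblk ns i) * (D_off * D_off) * \<pi> ((1\<^sub>m (bsize ns) - Pblk ns i) * y) = 0\<^sub>m m m"
      unfolding compress[of "D_off * D_off", OF mult_carrier_mat[OF D_off_carrier D_off_carrier]]
      using block_diagonal_proj_mult[of "D_off * D_off" i] assms by simp
    then show ?thesis
      unfolding w_def by (rule comm_prod_pair[OF c0 c1 orth])
  qed
qed

lemma comm_prod_xi_sandwich:
  assumes "x \<in> alg ns" and "y \<in> alg ns" and "block_diagonal (D_off * D_off)"
  shows "\<forall>v\<in>set (xi_sandwich x y). comm_prod v = D_off * piword m \<pi> D v + piword m \<pi> D v * D_off"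
  unfolding xi_sandwich_def using assms xi_sandwich_word(1) by (auto simp del: comm_prod_Cons)

lemma piform_xi_sandwich:
  assumes "x \<in> alg ns" and "y \<in> alg ns"
  shows "piform m \<pi> D (xi_sandwich x y) = \<pi> x * D_off * \<pi> y"
proof -
  have "piform m \<pi> D (xi_sandwich x y) = msum m (map (\<lambda>i. \<pi> x * (proj i * D_off) * \<pi> y) [0..<length ns])"
    unfolding xi_sandwich_def using assms by (intro piform_map) (auto simp: xi_sandwich_word(2))
  also have "\<dots> = \<pi> x * msum m (map (\<lambda>i. proj i * D_off) [0..<length ns]) * \<pi> y"
    using assms by (simp add: mult_msum_left mult_msum_right o_def mat_simps)
  also have "msum m (map (\<lambda>i. proj i * D_off) [0..<length ns]) = D_off"
    using mult_msum_right[OF D_off_carrier, of "map proj [0..<length ns]"] by (simp add: msum_proj o_def)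
  finally show ?thesis .
qed

text \<open>\<open>a db\<close> and \<open>a \<xi> b - ab \<xi>\<close> have the same representative, since \<open>[D, \<pi>(b)] = [\<pi>(\<xi>), \<pi>(b)]\<close>.\<close>

definition xi_form_of_word :: "complex mat list \<Rightarrow> uform" where
  "xi_form_of_word w = xi_sandwich (hd w) (hd (tl w)) @ xi_sandwich (- (hd w * hd (tl w))) (1\<^sub>m (bsize ns))"

lemma xi_form_of_word_uform:
  assumes "is_uform ns 1 [w]"
  shows "is_uform ns 1 (xi_form_of_word w)"
proof -
  obtain a b where w: "w = [a, b]" and a: "a \<in> alg ns" and b: "b \<in> alg ns"
    using assms by (auto simp: length_Suc_conv)
  show ?thesis
    unfolding xi_form_of_word_def w using xi_sandwich_uform a b by simp
qed

lemma piform_xi_form_of_word: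
  assumes "is_uform ns 1 [w]"
  shows "piform m \<pi> D (xi_form_of_word w) = piword m \<pi> D w"
proof -
  obtain a b where w: "w = [a, b]" and a: "a \<in> alg ns" and b: "b \<in> alg ns"
    using assms by (auto simp: length_Suc_conv)
  have "piform m \<pi> D (xi_form_of_word w) = \<pi> a * D_off * \<pi> b + \<pi> (- (a * b)) * D_off"
    unfolding xi_form_of_word_def w using a b
    by (simp add: piform_append[OF xi_sandwich_uform xi_sandwich_uform] piform_xi_sandwich)
  also have "\<dots> = \<pi> a * comm D_off (\<pi> b)"
    using a b by (simp add: pi_uminus pi_mult comm_def mat_simps) (auto intro: eq_matI)
  also have "\<dots> = piword m \<pi> D w"
    unfolding w using b by (simp add: piword_eq comm_D_eq_comm_D_off)
  finally show ?thesis .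
qed

lemma comm_prod_xi_form_of_word:
  assumes "is_uform ns 1 [w]" and bd: "block_diagonal (D_off * D_off)"
  shows "\<forall>v\<in>set (xi_form_of_word w). comm_prod v = D_off * piword m \<pi> D v + piword m \<pi> D v * D_off"
proof -
  obtain a b where w: "w = [a, b]" and a: "a \<in> alg ns" and b: "b \<in> alg ns"
    using assms by (auto simp: length_Suc_conv)
  show ?thesis
    unfolding xi_form_of_word_def w
    using comm_prod_xi_sandwich[OF a b bd] comm_prod_xi_sandwich[OF _ alg_one bd, of "- (a * b)"] a b
    by (simp add: ball_Un del: comm_prod_Cons)
qed

subsection \<open>The identities in \<open>\<Omega>\<^sup>2(\<A>)\<close>\<close>

lemma xi_xi_uform: "is_uform ns 2 (umul ns (xi ns) (xi ns))"
  using umul_uform[OF xi_uform xi_uform] by (simp add: numeral_2_eq_2)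

lemma piform_xi_xi: "piform m \<pi> D (umul ns (xi ns) (xi ns)) = D_off * D_off"
  by (simp add: piform_umul[OF xi_uform xi_uform] piform_xi)

lemma omega_eq_proj_xi_xi_proj:
  assumes "block_diagonal (D_off * D_off)"
  shows "omega_eq ns m \<pi> D 2
    (concat (map (\<lambda>i. umul ns (umul ns [[Pblk ns i]] (umul ns (xi ns) (xi ns))) [[Pblk ns i]]) [0..<length ns]))
    (umul ns (xi ns) (xi ns))"
proof (rule omega_eq_if_piform_eq)
  have P: "is_uform ns 0 [[Pblk ns i]]" for i by simp
  have PxxP: "is_uform ns 2 (umul ns (umul ns [[Pblk ns i]] (umul ns (xi ns) (xi ns))) [[Pblk ns i]])" for i
    using umul_uform[OF umul_uform[OF P xi_xi_uform] P] by (simp add: numeral_2_eq_2)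
  then show "is_uform ns 2 (concat (map (\<lambda>i. umul ns (umul ns [[Pblk ns i]] (umul ns (xi ns) (xi ns)))
      [[Pblk ns i]]) [0..<length ns]))"
    by simp
  have "piform m \<pi> D [[Pblk ns i]] = proj i" for i
    by (simp add: piform_eq_msum piword_eq)
  then have "piform m \<pi> D (umul ns (umul ns [[Pblk ns i]] (umul ns (xi ns) (xi ns))) [[Pblk ns i]])
      = proj i * (D_off * D_off) * proj i" for i
    unfolding piform_umul[OF umul_uform[OF P xi_xi_uform] P] piform_umul[OF P xi_xi_uform] piform_xi_xi
    by simp
  then show "piform m \<pi> D (concat (map (\<lambda>i. umul ns (umul ns [[Pblk ns i]] (umul ns (xi ns) (xi ns)))
      [[Pblk ns i]]) [0..<length ns])) = piform m \<pi> D (umul ns (xi ns) (xi ns))"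
    using assms PxxP by (simp add: piform_concat[where n = 2] piform_xi_xi block_diagonal_def)
qed (rule xi_xi_uform)

lemma omega_eq_d_xi:
  assumes "block_diagonal (D_off * D_off)"
  shows "omega_eq ns m \<pi> D 2 (ud ns (xi ns)) (uadd (umul ns (xi ns) (xi ns)) (umul ns (xi ns) (xi ns)))"
  using ud_uform[OF xi_uform] xi_xi_uform assms
  by (intro omega_eq_if_piform_eq)
    (simp_all add: numeral_2_eq_2 piform_ud_xi piform_uadd[OF xi_xi_uform xi_xi_uform] piform_xi_xi
      block_diagonal_def)

lemma omega_eq_d_one_form:
  assumes bd: "block_diagonal (D_off * D_off)" and \<omega>: "is_uform ns 1 \<omega>"
  shows "omega_eq ns m \<pi> D 2 (ud ns \<omega>) (uadd (umul ns (xi ns) \<omega>) (umul ns \<omega> (xi ns)))"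
proof -
  have word: "is_uform ns 1 [w]" if "w \<in> set \<omega>" for w
    using \<omega> that by (simp add: is_uform_def)
  define \<eta> where "\<eta> = concat (map xi_form_of_word \<omega>)"
  have \<eta>: "is_uform ns 1 \<eta>"
    unfolding \<eta>_def using xi_form_of_word_uform[OF word] by simp
  have "piform m \<pi> D \<eta> = msum m (map (\<lambda>w. piform m \<pi> D (xi_form_of_word w)) \<omega>)"
    unfolding \<eta>_def using xi_form_of_word_uform[OF word] by (simp add: piform_concat[where n = 1])
  also have "\<dots> = piform m \<pi> D \<omega>"
    unfolding piform_eq_msum[of \<omega>] using piform_xi_form_of_word[OF word]
    by (intro arg_cong[where f = "msum m"] map_cong) simp_all
  finally have piform_\<eta>: "piform m \<pi> D \<eta> = piform m \<pi> D \<omega>" .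
  have d_\<eta>: "piform m \<pi> D (ud ns \<eta>) = D_off * piform m \<pi> D \<omega> + piform m \<pi> D \<omega> * D_off"
    unfolding piform_\<eta>[symmetric] using \<eta> comm_prod_xi_form_of_word[OF word bd]
    by (intro piform_ud_eq_D_off_anticomm) (auto simp: \<eta>_def)
  define j where "j = usub \<omega> \<eta>"
  have j: "is_uform ns 1 j"
    unfolding j_def using \<omega> \<eta> by simp
  have piform_j: "piform m \<pi> D j = 0\<^sub>m m m"
    unfolding j_def piform_usub[OF \<omega> \<eta>] piform_\<eta> using \<omega> by simp
  define S where "S = uadd (umul ns (xi ns) \<omega>) (umul ns \<omega> (xi ns))"
  have d\<omega>: "is_uform ns 2 (ud ns \<omega>)" and dj: "is_uform ns 2 (ud ns j)"
    using ud_uform[OF \<omega>] ud_uform[OF j] by (simp_all add: numeral_2_eq_2)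
  have S: "is_uform ns 2 S"
    unfolding S_def using umul_uform[OF xi_uform \<omega>] umul_uform[OF \<omega> xi_uform] by (simp add: numeral_2_eq_2)
  have piform_S: "piform m \<pi> D S = D_off * piform m \<pi> D \<omega> + piform m \<pi> D \<omega> * D_off"
    unfolding S_def
    using piform_uadd[OF umul_uform[OF xi_uform \<omega>] umul_uform[OF \<omega> xi_uform]]
    by (simp add: piform_umul[OF xi_uform \<omega>] piform_umul[OF \<omega> xi_uform] piform_xi)
  have "piform m \<pi> D (usub (usub (ud ns \<omega>) S) (ud ns j))
      = (piform m \<pi> D (ud ns \<omega>) - piform m \<pi> D S) - (piform m \<pi> D (ud ns \<omega>) - piform m \<pi> D (ud ns \<eta>))"
    unfolding piform_usub[OF usub_uform[OF d\<omega> S] dj] piform_usub[OF d\<omega> S]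
      piform_ud_usub[OF \<omega> \<eta>, folded j_def] ..
  also have "\<dots> = 0\<^sub>m m m"
    unfolding piform_S d_\<eta> using \<omega> by simp
  finally have "piform m \<pi> D (usub (usub (ud ns \<omega>) S) (ud ns j)) = 0\<^sub>m m m" .
  with j piform_j show ?thesis
    unfolding omega_eq_def S_def by auto
qed

lemma omega_eq_curvature_zero:
  assumes "block_diagonal (D_off * D_off)"
  defines "H \<equiv> uneg (uadd (xi ns) (xi ns))"
  shows "omega_eq ns m \<pi> D 2 (uadd (ud ns H) (umul ns H H)) []"
proof (rule omega_eq_if_piform_eq)
  have xi2: "is_uform ns 1 (uadd (xi ns) (xi ns))" using xi_uform by simp
  have H: "is_uform ns 1 H" unfolding H_def using xi2 by simp
  have dH: "is_uform ns 2 (ud ns H)" and HH: "is_uform ns 2 (umul ns H H)"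
    using ud_uform[OF H] umul_uform[OF H H] by (simp_all add: numeral_2_eq_2)
  then show "is_uform ns 2 (uadd (ud ns H) (umul ns H H))" by simp
  have piform_H: "piform m \<pi> D H = - (D_off + D_off)"
    unfolding H_def piform_uneg[OF xi2] piform_uadd[OF xi_uform xi_uform] piform_xi ..
  have piform_dH: "piform m \<pi> D (ud ns H) = - ((D_off * D_off + D_off * D_off) + (D_off * D_off + D_off * D_off))"
    unfolding H_def piform_ud_uneg[OF xi2] piform_ud_uadd[OF xi_uform xi_uform] piform_ud_xi
    using assms by (simp add: block_diagonal_def)
  have "piform m \<pi> D (uadd (ud ns H) (umul ns H H))
      = - ((D_off * D_off + D_off * D_off) + (D_off * D_off + D_off * D_off)) + (- (D_off + D_off)) * (- (D_off + D_off))"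
    unfolding piform_uadd[OF dH HH] piform_umul[OF H H] piform_H piform_dH ..
  also have "\<dots> = 0\<^sub>m m m"
    by (simp add: mat_simps) (auto intro: eq_matI)
  finally show "piform m \<pi> D (uadd (ud ns H) (umul ns H H)) = piform m \<pi> D []" by simp
qed simp

end

theorem lemma10:
  fixes ns :: "nat list" and m :: nat and \<pi> :: "complex mat \<Rightarrow> complex mat"
    and J :: "complex vec \<Rightarrow> complex vec" and \<gamma> D :: "complex mat"
  assumes ST: "finite_spectral_triple ns m \<pi> J \<gamma>"
    and Dir: "dirac_operator ns m \<pi> J \<gamma> D"
    and hyp: "piform m \<pi> D (xi ns) * piform m \<pi> D (xi ns) =
      foldr (\<lambda>i M. \<pi> (Pblk ns i) * (piform m \<pi> D (xi ns) * piform m \<pi> D (xi ns)) * \<pi> (Pblk ns i) + M)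
        [0..<length ns] (0\<^sub>m m m)"
  shows "omega_eq ns m \<pi> D 2
           (concat (map (\<lambda>i. umul ns (umul ns [[Pblk ns i]] (umul ns (xi ns) (xi ns))) [[Pblk ns i]])
              [0..<length ns]))
           (umul ns (xi ns) (xi ns)) \<and>
         omega_eq ns m \<pi> D 2 (ud ns (xi ns))
           (uadd (umul ns (xi ns) (xi ns)) (umul ns (xi ns) (xi ns))) \<and>
         (\<forall>\<omega>. is_uform ns 1 \<omega> \<longrightarrow>
           omega_eq ns m \<pi> D 2 (ud ns \<omega>) (uadd (umul ns (xi ns) \<omega>) (umul ns \<omega> (xi ns)))) \<and>
         (let H = uneg (uadd (xi ns) (xi ns)) in
           omega_eq ns m \<pi> D 2 (uadd (ud ns H) (umul ns H H)) [])"
proof -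
  interpret finite_dirac ns m \<pi> J \<gamma> D
    using ST Dir by unfold_locales
  have "block_diagonal (D_off * D_off)"
    using hyp unfolding block_diagonal_def piform_xi msum_def foldr_map o_def by simp
  then show ?thesis
    using omega_eq_proj_xi_xi_proj omega_eq_d_xi omega_eq_d_one_form omega_eq_curvature_zero
    by (simp add: Let_def)
qed

end
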